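(* Consider the diploid population model of the context with environment (A), and suppose $1\le\alpha<2$, $\liminf_{N\to\infty}\zeta(N)/N>0$, and $\varepsilon_N=cN^{\alpha-2}(\mathbf 1\{\kappa>2\}+\mathbf 1\{\kappa=2\}\log N)$ for a fixed $c>0$. Then $$\lim_{N\to\infty}\frac{N^2}{c_N}\,\mathbb E\Big[\frac{X_1(X_1-1)X_2(X_2-1)}{S_N^4}\mathbf 1\{S_N\ge2N\}\Big]=0.$$
   Context: Population of $2N$ diploid individuals; each generation they form $N$ uniformly random parent pairs, pair $i$ produces $X_i$ diploid potential offspring (one gene copy from each parent, chosen uniformly from that parent's two copies), $S_N=X_1+\dots+X_N$; if $S_N\ge2N$, $2N$ potential offspring are sampled uniformly without replacement to survive, otherwise the population is unchanged; generations are independent. Environment (A): fix $0<\alpha<2\le\kappa$; with probability $\varepsilon_N\in(0,1)$ all $X_i$ are i.i.d. with law $\mathbb L(\alpha,\zeta(N))$, otherwise i.i.d. with law $\mathbb L(\kappa,\zeta(N))$. Here $X\vartriangleright\mathbb L(a,\zeta(N))$ means $\mathbb P(X\le\zeta(N))=1$, remaining mass outside $\{2,\dots,\zeta(N)\}$ on $\{0,1\}$, and $g_a(k)(k^{-a}-(1+k)^{-a})\le\mathbb P(X=k)\le f_a(k)(k^{-a}-(1+k)^{-a})$ for $2\le k\le\zeta(N)$, with $g_a\le f_a$ bounded positive functions, $\inf_k\sup_{i\ge k}f_a(i)<\infty$, $\sup_k\inf_{i\ge k}g_a(i)>0$, limits $\lim_kf_a(k),\lim_kg_a(k)$ existing and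 positive; $\mathbb E[X]>2$ is assumed. $c_N=\mathbb E[\nu_1(\nu_1-1)]/(8(2N-1))$ where $\nu_1$ is the number of surviving offspring of pair 1. *)

theory Defs
  imports "HOL-Probability.Probability" "HOL-Library.Liminf_Limsup"
begin

definition admissible_bounds :: "(nat \<Rightarrow> real) \<Rightarrow> (nat \<Rightarrow> real) \<Rightarrow> bool" where
  "admissible_bounds g f \<longleftrightarrow>
     (\<forall>k. 0 < g k \<and> g k \<le> f k) \<and> (\<exists>B. \<forall>k. f k \<le> B) \<and>
     limsup (\<lambda>k. ereal (f k)) < \<infinity> \<and> liminf (\<lambda>k. ereal (g k)) > 0 \<and>
     (\<exists>l. (f \<longlongrightarrow> l) sequentially \<and> l > 0) \<and>
     (\<exists>l. (g \<longlongrightarrow> l) sequentially \<and> l > 0)"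

definition in_class_L :: "nat pmf \<Rightarrow> real \<Rightarrow> nat \<Rightarrow> (nat \<Rightarrow> real) \<Rightarrow> (nat \<Rightarrow> real) \<Rightarrow> bool" where
  "in_class_L p a z g f \<longleftrightarrow>
     (\<forall>k. z < k \<longrightarrow> pmf p k = 0) \<and>
     (\<forall>k. 2 \<le> k \<and> k \<le> z \<longrightarrow>
        g k * (real k powr (-a) - real (k+1) powr (-a)) \<le> pmf p k \<and>
        pmf p k \<le> f k * (real k powr (-a) - real (k+1) powr (-a)))"

text \<open>Joint law of (X_1,...,X_N) (indexed 0..N-1) in environment (A):
  with probability eps all X_i i.i.d. with law p_alpha, otherwise i.i.d. with law p_kappa.\<close>
definition envA_law :: "nat \<Rightarrow> real \<Rightarrow> nat pmf \<Rightarrow> nat pmf \<Rightarrow> (nat \<Rightarrow> nat) pmf" where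
  "envA_law N eps pa pk =
     bind_pmf (bernoulli_pmf eps) (\<lambda>b. Pi_pmf {..<N} 0 (\<lambda>_. if b then pa else pk))"

definition S_tot :: "nat \<Rightarrow> (nat \<Rightarrow> nat) \<Rightarrow> nat" where
  "S_tot N x = (\<Sum>i<N. x i)"

text \<open>Conditional expectation of nu_1(nu_1 - 1) given the potential offspring numbers x:
  if S_N \<ge> 2N, nu_1 is hypergeometric (2N drawn without replacement from S_N, of which
  x 0 belong to pair 1); otherwise no sampling takes place and we set it to 0.\<close>
definition nu1_fact2 :: "nat \<Rightarrow> (nat \<Rightarrow> nat) \<Rightarrow> real" where
  "nu1_fact2 N x =
     (if 2*N \<le> S_tot N x then
        (\<Sum>k\<le>2*N. real k * (real k - 1) *
           real (x 0 choose k) * real ((S_tot N x - x 0) choose (2*N - k))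
           / real (S_tot N x choose (2*N)))
      else 0)"

definition coal_cN :: "nat \<Rightarrow> (nat \<Rightarrow> nat) pmf \<Rightarrow> real" where
  "coal_cN N P = measure_pmf.expectation P (nu1_fact2 N) / (8 * (2 * real N - 1))"

end

theory Submission
  imports Defs
begin

(* Write h for the integrand X_1(X_1-1)X_2(X_2-1)/S_N^4 1{S_N >= 2N}. Conditioning on the
   environment splits every expectation into an alpha-part of weight eps_N and a kappa-part.

   Denominator: c_N >= const/N. With probability bounded below, pair 1 has exactly two potential
   offspring while 2N <= S_N <= KN; then nu_1 = 2 with probability of order 1. The lower bound
   P(X_2 + ... + X_N >= 2(N-1)) >= const comes from a Paley-Zygmund argument, based on second
   and fourth moments, applied to the sum of the kappa-variables truncated at a level L_N
   (N^(1/(4-s)) for kappa > 2, sqrt N for kappa = 2); the upper bound S_N <= KN is Markov.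

   Numerator: given the pairs 3..N, h <= phi(M)^2 with M = max(2N, X_3 + ... + X_N) and
   phi(M) = E min(1, X/M)^2. For s < a, s <= 2, phi(M) <= M^(-s) E X^s, whence
   E_kappa h = O(N^(-7/2)) and, for alpha > 1, E_alpha h = O(N^(-(1+3 alpha)/2)). For alpha = 1
   one has phi(M) = O(1/M) instead, and a Chernoff bound shows that X_3 + ... + X_N is of order
   at least N log N outside an event of probability O(N^(-g/16)).

   Altogether N^2/c_N E h = O(N^3 (eps_N E_alpha h + E_kappa h)), which tends to 0. *)

section \<open>Expectations with respect to finitely supported pmfs\<close>

abbreviation E :: "'a pmf \<Rightarrow> ('a \<Rightarrow> real) \<Rightarrow> real" where
  "E M f \<equiv> measure_pmf.expectation M f"

lemma finite_set_Pi_pmf: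
  assumes "finite I" "\<And>i. finite (set_pmf (p i))"
  shows "finite (set_pmf (Pi_pmf I d p))"
  using assms by (subst set_Pi_pmf) auto

lemma expectation_eq_sum_set_pmf:
  assumes "finite (set_pmf M)"
  shows "E M f = (\<Sum>x\<in>set_pmf M. pmf M x * f x)"
  using assms by (subst integral_measure_pmf[of "set_pmf M"]) auto

lemma expectation_mono_finite:
  assumes "finite (set_pmf M)" "\<And>x. x \<in> set_pmf M \<Longrightarrow> f x \<le> g x"
  shows "E M f \<le> E M g"
  using assms by (intro integral_mono_AE integrable_measure_pmf_finite AE_pmfI) auto

lemma expectation_nonneg_pmf:
  assumes "\<And>x. x \<in> set_pmf M \<Longrightarrow> 0 \<le> f x"
  shows "0 \<le> E M f"
  using assms by (intro integral_nonneg_AE AE_pmfI) auto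

lemma expectation_sum_finite:
  assumes "finite (set_pmf M)"
  shows "E M (\<lambda>y. \<Sum>k\<in>A. f k y) = (\<Sum>k\<in>A. E M (f k))"
  using assms by (intro Bochner_Integration.integral_sum integrable_measure_pmf_finite)

lemma expectation_swap:
  fixes f :: "'a \<Rightarrow> 'b \<Rightarrow> real"
  assumes A: "finite (set_pmf A)" and B: "finite (set_pmf B)"
  shows "E A (\<lambda>a. E B (\<lambda>b. f a b)) = E B (\<lambda>b. E A (\<lambda>a. f a b))"
  using A B by (simp add: expectation_eq_sum_set_pmf sum_distrib_left mult.left_commute
      sum.swap[of _ "set_pmf A"])

lemma expectation_bind_pmf:
  assumes "finite (set_pmf A)" "\<And>a. finite (set_pmf (B a))"
  shows "E (bind_pmf A B) f = E A (\<lambda>a. E (B a) f)"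
  using assms by (subst pmf_expectation_bind[of "set_pmf A"])
    (auto simp: expectation_eq_sum_set_pmf)

lemma expectation_pair_pmf:
  fixes f :: "'a \<times> 'b \<Rightarrow> real"
  assumes "finite (set_pmf A)" "finite (set_pmf B)"
  shows "E (pair_pmf A B) f = E A (\<lambda>a. E B (\<lambda>b. f (a, b)))"
  using assms unfolding pair_pmf_def
  by (simp add: expectation_bind_pmf map_pmf_def[symmetric])

lemma expectation_Pi_pmf_insert:
  fixes F :: "('i \<Rightarrow> 'b) \<Rightarrow> real"
  assumes "finite I" "j \<notin> I" "\<And>i. finite (set_pmf (p i))"
  shows "E (Pi_pmf (insert j I) d p) F = E (p j) (\<lambda>a. E (Pi_pmf I d p) (\<lambda>y. F (y(j := a))))"
proof -
  have "E (Pi_pmf (insert j I) d p) F = E (pair_pmf (p j) (Pi_pmf I d p)) (\<lambda>(y, f). F (f(j := y)))"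
    using assms by (subst Pi_pmf_insert) (auto simp: case_prod_unfold)
  also have "\<dots> = E (p j) (\<lambda>a. E (Pi_pmf I d p) (\<lambda>y. F (y(j := a))))"
    using assms by (subst expectation_pair_pmf) (auto intro!: finite_set_Pi_pmf)
  finally show ?thesis .
qed

lemma pmf_times_le_expectation:
  assumes "finite (set_pmf M)" "\<And>x. x \<in> set_pmf M \<Longrightarrow> 0 \<le> f x"
  shows "pmf M k * f k \<le> E M f"
proof (cases "k \<in> set_pmf M")
  case True
  then have "(\<Sum>x\<in>{k}. pmf M x * f x) \<le> (\<Sum>x\<in>set_pmf M. pmf M x * f x)"
    using assms by (intro sum_mono2) auto
  then show ?thesis
    using assms by (simp add: expectation_eq_sum_set_pmf)
next
  case False
  then show ?thesis
    using expectation_nonneg_pmf[of M f, OF assms(2)] by (simp add: set_pmf_eq)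
qed

lemma expectation_Cauchy_Schwarz:
  assumes "finite (set_pmf M)"
  shows "(E M (\<lambda>x. U x * V x))\<^sup>2 \<le> E M (\<lambda>x. (U x)\<^sup>2) * E M (\<lambda>x. (V x)\<^sup>2)"
proof -
  let ?s = "\<lambda>x. sqrt (pmf M x)"
  have "E M (\<lambda>x. U x * V x) = (\<Sum>x\<in>set_pmf M. (?s x * U x) * (?s x * V x))"
    using assms by (simp add: expectation_eq_sum_set_pmf algebra_simps real_sqrt_mult[symmetric])
  moreover have "E M (\<lambda>x. (U x)\<^sup>2) = (\<Sum>x\<in>set_pmf M. (?s x * U x)\<^sup>2)"
    using assms by (simp add: expectation_eq_sum_set_pmf power_mult_distrib)
  moreover have "E M (\<lambda>x. (V x)\<^sup>2) = (\<Sum>x\<in>set_pmf M. (?s x * V x)\<^sup>2)"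
    using assms by (simp add: expectation_eq_sum_set_pmf power_mult_distrib)
  ultimately show ?thesis by (simp add: Cauchy_Schwarz_ineq_sum)
qed

lemma markov_inequality_pmf:
  assumes "finite (set_pmf M)" "\<And>x. 0 \<le> X x" "0 < c"
  shows "E M (\<lambda>x. if c < X x then 1 else 0) \<le> E M X / c"
proof -
  have "E M (\<lambda>x. if c < X x then 1 else 0) \<le> E M (\<lambda>x. X x / c)"
    using assms by (intro expectation_mono_finite) auto
  then show ?thesis by simp
qed

lemma expectation_envA_law:
  assumes "0 \<le> e" "e \<le> 1" "finite (set_pmf pa)" "finite (set_pmf pk)"
  shows "E (envA_law N e pa pk) F =
    e * E (Pi_pmf {..<N} 0 (\<lambda>_. pa)) F + (1 - e) * E (Pi_pmf {..<N} 0 (\<lambda>_. pk)) F"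
  using assms unfolding envA_law_def
  by (subst expectation_bind_pmf) (auto intro!: finite_set_Pi_pmf simp: integral_measure_pmf[of UNIV] UNIV_bool)

lemma expectation_sum_Pi_pmf:
  assumes "finite I" "finite (set_pmf q)"
  shows "E (Pi_pmf I 0 (\<lambda>_. q)) (\<lambda>y. real (\<Sum>i\<in>I. y i)) = real (card I) * E q real"
proof -
  have "E (Pi_pmf I 0 (\<lambda>_. q)) (\<lambda>y. real (y i)) = E q real" if "i \<in> I" for i
  proof -
    have "E (Pi_pmf I 0 (\<lambda>_. q)) (\<lambda>y. real (y i)) = E (map_pmf (\<lambda>y. y i) (Pi_pmf I 0 (\<lambda>_. q))) real"
      by simp
    also have "map_pmf (\<lambda>y. y i) (Pi_pmf I 0 (\<lambda>_. q)) = q"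
      using Pi_pmf_component[OF assms(1), of i 0 "\<lambda>_. q"] that by simp
    finally show ?thesis .
  qed
  then show ?thesis
    using assms by (simp add: expectation_sum_finite finite_set_Pi_pmf)
qed

section \<open>Offspring laws with power-law tails\<close>

lemma admissible_bounds_upper:
  assumes "admissible_bounds g f"
  obtains B where "0 < B" "\<And>k. f k \<le> B"
proof -
  from assms obtain B where "\<forall>k. f k \<le> B"
    unfolding admissible_bounds_def by auto
  then have "f k \<le> max B 1" for k
    by (simp add: le_max_iff_disj)
  then show ?thesis
    using that[of "max B 1"] by simp
qed

lemma admissible_bounds_lower:
  assumes "admissible_bounds g f"
  obtains g0 where "0 < g0" "\<And>k. g0 \<le> g k"
proof -
  from assms obtain l where l: "(g \<longlongrightarrow> l) sequentially" "l > 0" and gpos: "\<forall>k. 0 < g k"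
    unfolding admissible_bounds_def by auto
  obtain K where K: "\<And>k. k \<ge> K \<Longrightarrow> g k > l / 2"
    using order_tendstoD(1)[OF l(1), of "l / 2"] l(2) by (auto simp: eventually_sequentially)
  define g0 where "g0 = min (l / 2) (Min (g ` {..K}))"
  have "0 < Min (g ` {..K})"
    using gpos by (subst Min_gr_iff) auto
  then have "0 < g0"
    unfolding g0_def using l(2) by simp
  moreover have "g0 \<le> g k" for k
  proof (cases "k \<le> K")
    case True
    then show ?thesis unfolding g0_def by (intro min.coboundedI2 Min_le) auto
  next
    case False
    then show ?thesis unfolding g0_def using K[of k] by linarith
  qed
  ultimately show ?thesis using that by blast
qed

lemma powr_diff_Suc_nonneg:
  assumes "0 < a" "1 \<le> k"
  shows "0 \<le> real k powr (-a) - real (k + 1) powr (-a)"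
  using assms by (auto intro!: powr_mono2')

lemma powr_diff_Suc_le:
  assumes "0 < a" "1 \<le> k"
  shows "real k powr (-a) - real (k + 1) powr (-a) \<le> a * real k powr (-a - 1)"
proof -
  define F where "F = (\<lambda>x::real. - (x powr (-a)))"
  have "(F has_real_derivative a * x powr (-a - 1)) (at x)" if "real k \<le> x" for x
  proof -
    have "x > 0" using assms that by auto
    from DERIV_minus[OF has_real_derivative_powr[OF this, of "-a"]]
    show ?thesis unfolding F_def by simp
  qed
  from MVT2[of "real k" "real (k + 1)" F, OF _ this]
  obtain y where y: "real k < y" "y < real (k + 1)"
    "F (real (k + 1)) - F (real k) = (real (k + 1) - real k) * (a * y powr (-a - 1))"
    by auto
  have "y powr (-a - 1) \<le> real k powr (-a - 1)"
    using assms y by (intro powr_mono2') auto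
  then show ?thesis
    using y assms unfolding F_def by simp
qed

definition zeta_sum :: "real \<Rightarrow> real" where
  "zeta_sum r = (\<Sum>n. real n powr (-r))"

lemma zeta_sum_nonneg: "1 < r \<Longrightarrow> 0 \<le> zeta_sum r"
  unfolding zeta_sum_def by (intro suminf_nonneg) (auto simp: summable_real_powr_iff)

text \<open>The class \<open>L(a, z)\<close> with the bounding functions replaced by uniform constants
  \<open>g0 \<le> g\<close> and \<open>f \<le> B\<close>.\<close>

locale powerlaw_pmf =
  fixes p :: "nat pmf" and a :: real and z :: nat and B g0 :: real
  assumes a_pos: "0 < a" and B_pos: "0 < B" and g0_pos: "0 < g0"
    and pmf_beyond: "\<And>k. z < k \<Longrightarrow> pmf p k = 0"
    and pmf_lower: "\<And>k. 2 \<le> k \<Longrightarrow> k \<le> z \<Longrightarrow>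
      g0 * (real k powr (-a) - real (k + 1) powr (-a)) \<le> pmf p k"
    and pmf_upper: "\<And>k. 2 \<le> k \<Longrightarrow> k \<le> z \<Longrightarrow>
      pmf p k \<le> B * (real k powr (-a) - real (k + 1) powr (-a))"

lemma powerlaw_pmf_of_in_class_L:
  assumes bounds: "admissible_bounds g f" and in_class: "\<And>N. in_class_L (p N) a (z N) g f"
    and "0 < a"
  obtains B g0 where "\<And>N. powerlaw_pmf (p N) a (z N) B g0"
proof -
  obtain B where B: "0 < B" "\<And>k. f k \<le> B"
    using admissible_bounds_upper[OF bounds] by blast
  obtain g0 where g0: "0 < g0" "\<And>k. g0 \<le> g k"
    using admissible_bounds_lower[OF bounds] by blast
  have "powerlaw_pmf (p N) a (z N) B g0" for N
  proof
    fix k assume k: "2 \<le> k" "k \<le> z N"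
    have incr: "0 \<le> real k powr (-a) - real (k + 1) powr (-a)"
      using powr_diff_Suc_nonneg[OF \<open>0 < a\<close>] k by auto
    have "g0 * (real k powr (-a) - real (k + 1) powr (-a))
        \<le> g k * (real k powr (-a) - real (k + 1) powr (-a))"
      using incr g0 by (intro mult_right_mono) auto
    also have "\<dots> \<le> pmf (p N) k"
      using in_class[of N] k unfolding in_class_L_def by auto
    finally show "g0 * (real k powr (-a) - real (k + 1) powr (-a)) \<le> pmf (p N) k" .
    have "pmf (p N) k \<le> f k * (real k powr (-a) - real (k + 1) powr (-a))"
      using in_class[of N] k unfolding in_class_L_def by auto
    also have "\<dots> \<le> B * (real k powr (-a) - real (k + 1) powr (-a))"
      using incr B by (intro mult_right_mono) auto
    finally show "pmf (p N) k \<le> B * (real k powr (-a) - real (k + 1) powr (-a))" .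
  qed (use in_class B g0 \<open>0 < a\<close> in \<open>auto simp: in_class_L_def\<close>)
  then show ?thesis using that by blast
qed

context powerlaw_pmf
begin

lemma set_pmf_subset: "set_pmf p \<subseteq> {..z}"
  using pmf_beyond by (auto simp: set_pmf_eq not_le[symmetric])

lemma finite_support: "finite (set_pmf p)"
  using set_pmf_subset by (rule finite_subset) auto

lemma expectation_eq_sum: "E p h = (\<Sum>k\<le>z. pmf p k * h k)"
  using set_pmf_subset by (subst integral_measure_pmf[of "{..z}"]) auto

lemma pmf_le_increment:
  assumes "2 \<le> k"
  shows "pmf p k \<le> B * (real k powr (-a) - real (k + 1) powr (-a))"
proof (cases "k \<le> z")
  case True
  then show ?thesis using pmf_upper assms by blast
next
  case False
  then show ?thesis
    using pmf_beyond[of k] powr_diff_Suc_nonneg[OF a_pos, of k] assms B_pos by auto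
qed

lemma pmf_le_powr:
  assumes "2 \<le> k"
  shows "pmf p k \<le> B * a * real k powr (-a - 1)"
proof -
  have "pmf p k \<le> B * (real k powr (-a) - real (k + 1) powr (-a))"
    using pmf_le_increment[OF assms] .
  also have "\<dots> \<le> B * (a * real k powr (-a - 1))"
    using powr_diff_Suc_le[OF a_pos, of k] assms B_pos by (intro mult_left_mono) auto
  finally show ?thesis by simp
qed

lemma pmf_le_inverse_power:
  assumes "a = real m" "2 \<le> k"
  shows "pmf p k \<le> B * a / real k ^ (m + 1)"
proof -
  have "-a - 1 = - real (m + 1)"
    using assms by simp
  then have "real k powr (-a - 1) = real k powr (- real (m + 1))"
    by (rule arg_cong)
  also have "\<dots> = 1 / real k ^ (m + 1)"
    using assms by (simp only: powr_minus_divide powr_realpow of_nat_0_less_iff)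
  finally show ?thesis
    using pmf_le_powr[OF assms(2)] by simp
qed

lemma tail_sum_le:
  assumes "2 \<le> m"
  shows "(\<Sum>k\<in>{m..z}. pmf p k) \<le> B * real m powr (-a)"
proof (cases "m \<le> z")
  case True
  have "(\<Sum>k\<in>{m..z}. pmf p k) \<le> (\<Sum>k\<in>{m..z}. B * (real k powr (-a) - real (k + 1) powr (-a)))"
    using assms by (intro sum_mono pmf_le_increment) auto
  also have "\<dots> = B * (\<Sum>k\<in>{m..z}. real k powr (-a) - real (Suc k) powr (-a))"
    by (simp add: sum_distrib_left)
  also have "(\<Sum>k\<in>{m..z}. real k powr (-a) - real (Suc k) powr (-a)) = real m powr (-a) - real (Suc z) powr (-a)"
    using sum_Suc_diff[of m z "\<lambda>k. - (real k powr (-a))"] True by simp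
  also have "B * (real m powr (-a) - real (Suc z) powr (-a)) \<le> B * real m powr (-a)"
    using B_pos by (intro mult_left_mono) auto
  finally show ?thesis .
next
  case False
  then show ?thesis using B_pos by simp
qed

lemma powr_moment_le:
  assumes "0 \<le> s" "s < a"
  shows "E p (\<lambda>k. real k powr s) \<le> 2 + B * a * zeta_sum (a + 1 - s)"
proof -
  have summable: "summable (\<lambda>n. real n powr (-(a + 1 - s)))"
    using assms by (subst summable_real_powr_iff) auto
  have pointwise: "pmf p k * real k powr s \<le> (if k < 2 then 1 else 0) + B * a * real k powr (-(a + 1 - s))"
    for k
  proof (cases "k < 2")
    case True
    then have "real k powr s \<le> 1" by (cases k) (auto simp: less_Suc_eq)
    then have "pmf p k * real k powr s \<le> 1 * 1" by (intro mult_mono) (auto simp: pmf_le_1)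
    moreover have "0 \<le> B * a * real k powr (-(a + 1 - s))" using B_pos a_pos by simp
    ultimately show ?thesis using True by simp
  next
    case False
    then have "pmf p k * real k powr s \<le> (B * a * real k powr (-a - 1)) * real k powr s"
      by (intro mult_right_mono pmf_le_powr) auto
    also have "\<dots> = B * a * real k powr (-(a + 1 - s))"
      using False by (simp add: powr_add[symmetric] algebra_simps)
    finally show ?thesis using False by simp
  qed
  have small: "(\<Sum>k\<le>z. if k < 2 then 1 else 0::real) \<le> 2"
  proof -
    have "card {k. k \<le> z \<and> k < 2} \<le> card {0, 1::nat}" by (intro card_mono) auto
    then show ?thesis by (subst sum.inter_filter[symmetric]) auto
  qed
  have "E p (\<lambda>k. real k powr s) \<le> (\<Sum>k\<le>z. (if k < 2 then 1 else 0) + B * a * real k powr (-(a + 1 - s)))"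
    unfolding expectation_eq_sum by (intro sum_mono pointwise)
  also have "\<dots> = (\<Sum>k\<le>z. if k < 2 then 1 else 0) + B * a * (\<Sum>k\<le>z. real k powr (-(a + 1 - s)))"
    by (simp add: sum.distrib sum_distrib_left)
  also have "(\<Sum>k\<le>z. real k powr (-(a + 1 - s))) \<le> zeta_sum (a + 1 - s)"
    unfolding zeta_sum_def by (intro sum_le_suminf summable) auto
  finally show ?thesis
    using small B_pos a_pos by (simp add: mult_left_mono)
qed

lemma mean_le:
  assumes "1 < a"
  shows "E p real \<le> 2 + B * a * zeta_sum a"
  using powr_moment_le[of 1] assms by simp

end

section \<open>Bounding the numerator\<close>

definition merger_term :: "nat \<Rightarrow> (nat \<Rightarrow> nat) \<Rightarrow> real" where
  "merger_term N x = real (x 0) * (real (x 0) - 1) * real (x 1) * (real (x 1) - 1)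
     / real (S_tot N x) ^ 4 * (if 2 * N \<le> S_tot N x then 1 else 0)"

definition capped_share :: "nat \<Rightarrow> nat \<Rightarrow> real" where
  "capped_share k M = min 1 (real k / real M)"

definition capped_share_moment :: "nat pmf \<Rightarrow> nat \<Rightarrow> real" where
  "capped_share_moment q M = E q (\<lambda>k. capped_share k M ^ 2)"

lemma falling_factorial_2_nonneg: "0 \<le> real k * (real k - 1)"
  by (cases k) auto

lemma merger_term_nonneg: "0 \<le> merger_term N x"
  using mult_nonneg_nonneg[OF falling_factorial_2_nonneg[of "x 0"] falling_factorial_2_nonneg[of "x 1"]]
  unfolding merger_term_def by (simp add: mult.assoc)

lemma merger_expectation_nonneg: "0 \<le> E (Pi_pmf {..<N} 0 (\<lambda>_. q)) (merger_term N)"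
  by (intro expectation_nonneg_pmf merger_term_nonneg)

lemma S_tot_update_0_1:
  assumes "2 \<le> N"
  shows "S_tot N ((y(1 := b))(0 := a)) = a + b + (\<Sum>i\<in>{2..<N}. y i)"
proof -
  have "{..<N} = insert 0 (insert 1 {2..<N})" using assms by auto
  then have "S_tot N ((y(1 := b))(0 := a)) = a + b + (\<Sum>i\<in>{2..<N}. ((y(1 := b))(0 := a)) i)"
    unfolding S_tot_def by simp
  also have "(\<Sum>i\<in>{2..<N}. ((y(1 := b))(0 := a)) i) = (\<Sum>i\<in>{2..<N}. y i)"
    by (intro sum.cong) auto
  finally show ?thesis .
qed

lemma expectation_Pi_pmf_split_0_1:
  fixes F :: "(nat \<Rightarrow> nat) \<Rightarrow> real"
  assumes "2 \<le> N" "finite (set_pmf q)"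
  shows "E (Pi_pmf {..<N} 0 (\<lambda>_. q)) F =
    E q (\<lambda>a. E q (\<lambda>b. E (Pi_pmf {2..<N} 0 (\<lambda>_. q)) (\<lambda>y. F ((y(1 := b))(0 := a)))))"
proof -
  have "{..<N} = insert 0 (insert 1 {2..<N})" using assms by auto
  then show ?thesis
    using assms by (simp add: expectation_Pi_pmf_insert)
qed

lemma capped_share_nonneg: "0 \<le> capped_share k M"
  unfolding capped_share_def by auto

lemma capped_share_le_1: "capped_share k M \<le> 1"
  unfolding capped_share_def by auto

lemma capped_share_antimono:
  assumes "0 < M0" "M0 \<le> M"
  shows "capped_share k M \<le> capped_share k M0"
proof -
  have "real k / real M \<le> real k / real M0"
    using assms by (intro divide_left_mono) auto
  then show ?thesis unfolding capped_share_def by (meson min.mono order_refl)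
qed

lemma capped_share_moment_nonneg: "0 \<le> capped_share_moment q M"
  unfolding capped_share_moment_def by (intro expectation_nonneg_pmf) auto

lemma capped_share_moment_antimono:
  assumes "finite (set_pmf q)" "0 < M0" "M0 \<le> M"
  shows "capped_share_moment q M \<le> capped_share_moment q M0"
  unfolding capped_share_moment_def using assms capped_share_antimono capped_share_nonneg
  by (intro expectation_mono_finite power_mono) auto

text \<open>Given the pairs \<open>3, \<dots>, N\<close>, the two factors of the merger term decouple once the
  denominator is bounded below by \<open>M = max (2N) (X\<^sub>3 + \<dots> + X\<^sub>N)\<close>.\<close>

lemma merger_term_le_capped_shares:
  fixes y :: "nat \<Rightarrow> nat"
  assumes "2 \<le> N"
  defines "M \<equiv> max (2 * N) (\<Sum>i\<in>{2..<N}. y i)"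
  shows "merger_term N ((y(1 := b))(0 := a)) \<le> capped_share a M ^ 2 * capped_share b M ^ 2"
proof -
  define S where "S = a + b + (\<Sum>i\<in>{2..<N}. y i)"
  have S: "S_tot N ((y(1 := b))(0 := a)) = S"
    using S_tot_update_0_1[OF assms(1)] unfolding S_def by simp
  show ?thesis
  proof (cases "2 * N \<le> S")
    case False
    then show ?thesis unfolding merger_term_def S by simp
  next
    case True
    have MS: "M \<le> S" "0 < M"
      unfolding M_def using True assms S_def by auto
    have factor: "real u * (real u - 1) / real S ^ 2 \<le> capped_share u M ^ 2" if "u \<le> S" for u
    proof -
      have "real u * (real u - 1) / real S ^ 2 \<le> real u * real u / real S ^ 2"
        by (intro divide_right_mono mult_left_mono) auto
      also have "\<dots> = (real u / real S)\<^sup>2"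
        by (simp add: power2_eq_square)
      also have "real u / real S \<le> capped_share u M"
        using that MS unfolding capped_share_def by (auto intro: divide_left_mono)
      then have "(real u / real S)\<^sup>2 \<le> capped_share u M ^ 2"
        by (intro power_mono) auto
      finally show ?thesis .
    qed
    have "merger_term N ((y(1 := b))(0 := a))
        = (real a * (real a - 1) / real S ^ 2) * (real b * (real b - 1) / real S ^ 2)"
      unfolding merger_term_def S using True by (simp add: power2_eq_square power4_eq_xxxx field_simps)
    also have "\<dots> \<le> capped_share a M ^ 2 * capped_share b M ^ 2"
      using factor[of a] factor[of b] falling_factorial_2_nonneg[of a] falling_factorial_2_nonneg[of b]
      unfolding S_def by (intro mult_mono) auto
    finally show ?thesis .
  qed
qed

lemma expectation_merger_term_le:
  assumes "2 \<le> N" "finite (set_pmf q)"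
  shows "E (Pi_pmf {..<N} 0 (\<lambda>_. q)) (merger_term N) \<le>
    E (Pi_pmf {2..<N} 0 (\<lambda>_. q)) (\<lambda>y. capped_share_moment q (max (2 * N) (\<Sum>i\<in>{2..<N}. y i)) ^ 2)"
proof -
  let ?P = "Pi_pmf {2..<N} 0 (\<lambda>_. q)"
  let ?M = "\<lambda>y. max (2 * N) (\<Sum>i\<in>{2..<N}. y i)"
  have finite_P: "finite (set_pmf ?P)"
    using assms by (intro finite_set_Pi_pmf) auto
  have "E (Pi_pmf {..<N} 0 (\<lambda>_. q)) (merger_term N)
      = E q (\<lambda>a. E q (\<lambda>b. E ?P (\<lambda>y. merger_term N ((y(1 := b))(0 := a)))))"
    using expectation_Pi_pmf_split_0_1[OF assms] .
  also have "\<dots> \<le> E q (\<lambda>a. E q (\<lambda>b. E ?P (\<lambda>y. capped_share a (?M y) ^ 2 * capped_share b (?M y) ^ 2)))"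
    using assms finite_P by (intro expectation_mono_finite merger_term_le_capped_shares) auto
  also have "\<dots> = E ?P (\<lambda>y. E q (\<lambda>a. E q (\<lambda>b. capped_share a (?M y) ^ 2 * capped_share b (?M y) ^ 2)))"
    using assms finite_P by (simp add: expectation_swap[of q ?P])
  also have "\<dots> = E ?P (\<lambda>y. capped_share_moment q (?M y) ^ 2)"
    unfolding capped_share_moment_def by (simp add: power2_eq_square)
  finally show ?thesis .
qed

lemma min_1_square_le_powr:
  fixes t s :: real
  assumes "0 \<le> t" "0 \<le> s" "s \<le> 2"
  shows "(min 1 t)\<^sup>2 \<le> t powr s"
proof (cases "t \<le> 1")
  case True
  show ?thesis
  proof (cases "t = 0")
    case False
    then have "t powr 2 \<le> t powr s" using True assms by (intro powr_mono') auto
    then show ?thesis using True assms False by (simp add: powr_numeral)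
  qed simp
next
  case False
  then have "1 \<le> t powr s" using assms by (intro ge_one_powr_ge_zero) auto
  then show ?thesis using False by simp
qed

lemma capped_share_moment_le_powr:
  assumes "finite (set_pmf q)" "0 < M" "0 \<le> s" "s \<le> 2"
  shows "capped_share_moment q M \<le> real M powr (-s) * E q (\<lambda>k. real k powr s)"
proof -
  have "capped_share k M ^ 2 \<le> real M powr (-s) * real k powr s" for k
  proof -
    have "capped_share k M ^ 2 \<le> (real k / real M) powr s"
      unfolding capped_share_def using assms by (intro min_1_square_le_powr) auto
    also have "\<dots> = real M powr (-s) * real k powr s"
      by (simp add: powr_divide powr_minus_divide)
    finally show ?thesis .
  qed
  then have "capped_share_moment q M \<le> E q (\<lambda>k. real M powr (-s) * real k powr s)"
    unfolding capped_share_moment_def using assms by (intro expectation_mono_finite)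
  then show ?thesis by simp
qed

lemma (in powerlaw_pmf) expectation_merger_term_le_powr:
  assumes "2 \<le> N" "0 \<le> s" "s \<le> 2" "s < a"
  shows "E (Pi_pmf {..<N} 0 (\<lambda>_. p)) (merger_term N)
    \<le> (real N powr (-s) * (2 + B * a * zeta_sum (a + 1 - s)))\<^sup>2"
proof -
  let ?P = "Pi_pmf {2..<N} 0 (\<lambda>_. p)"
  have "capped_share_moment p N \<le> real N powr (-s) * E p (\<lambda>k. real k powr s)"
    using assms by (intro capped_share_moment_le_powr finite_support) auto
  also have "\<dots> \<le> real N powr (-s) * (2 + B * a * zeta_sum (a + 1 - s))"
    using powr_moment_le[of s] assms by (intro mult_left_mono) auto
  finally have moment: "capped_share_moment p N \<le> real N powr (-s) * (2 + B * a * zeta_sum (a + 1 - s))" .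
  have "E (Pi_pmf {..<N} 0 (\<lambda>_. p)) (merger_term N)
      \<le> E ?P (\<lambda>y. capped_share_moment p (max (2 * N) (\<Sum>i\<in>{2..<N}. y i)) ^ 2)"
    using expectation_merger_term_le[OF assms(1) finite_support] .
  also have "\<dots> \<le> E ?P (\<lambda>y. capped_share_moment p N ^ 2)"
    using assms finite_support
    by (intro expectation_mono_finite finite_set_Pi_pmf power_mono capped_share_moment_antimono
        capped_share_moment_nonneg) auto
  also have "\<dots> \<le> (real N powr (-s) * (2 + B * a * zeta_sum (a + 1 - s)))\<^sup>2"
    using moment capped_share_moment_nonneg by (simp add: power_mono)
  finally show ?thesis .
qed

lemma ln_le_harmonic_tail: "ln ((real K + 2) / 3) \<le> (\<Sum>k\<in>{2..K}. 1 / (real k + 1))"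
proof (induction K)
  case 0
  then show ?case by simp
next
  case (Suc K)
  show ?case
  proof (cases "K = 0")
    case True
    then show ?thesis by simp
  next
    case False
    have "(real (Suc K) + 2) / 3 = ((real K + 2) / 3) * (1 + 1 / (real K + 2))"
      by (simp add: field_simps)
    moreover have "ln (((real K + 2) / 3) * (1 + 1 / (real K + 2)))
        = ln ((real K + 2) / 3) + ln (1 + 1 / (real K + 2))"
      by (rule ln_mult_pos) (auto simp: add_pos_pos)
    ultimately have "ln ((real (Suc K) + 2) / 3) = ln ((real K + 2) / 3) + ln (1 + 1 / (real K + 2))"
      by metis
    also have "ln (1 + 1 / (real K + 2)) \<le> 1 / (real K + 2)"
      by (intro ln_add_one_self_le_self) auto
    also note Suc.IH
    also have "(\<Sum>k\<in>{2..K}. 1 / (real k + 1)) + 1 / (real K + 2) = (\<Sum>k\<in>{2..Suc K}. 1 / (real k + 1))"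
      using False by (simp add: sum.cl_ivl_Suc add_ac)
    finally show ?thesis by simp
  qed
qed

lemma chernoff_lower_tail:
  assumes "finite I" "finite (set_pmf q)" "0 < N"
  shows "E (Pi_pmf I 0 (\<lambda>_. q)) (\<lambda>y. if real (\<Sum>i\<in>I. y i) < real N * A then 1 else 0)
     \<le> exp A * (E q (\<lambda>k. exp (- real k / real N))) ^ card I"
proof -
  let ?P = "Pi_pmf I 0 (\<lambda>_. q)"
  have "(if real (\<Sum>i\<in>I. y i) < real N * A then 1 else 0) \<le> exp A * (\<Prod>i\<in>I. exp (- real (y i) / real N))"
    for y
  proof -
    have "(\<Prod>i\<in>I. exp (- real (y i) / real N)) = exp (\<Sum>i\<in>I. - real (y i) / real N)"
      using assms by (simp add: exp_sum)
    also have "(\<Sum>i\<in>I. - real (y i) / real N) = - (real (\<Sum>i\<in>I. y i) / real N)"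
      by (simp add: sum_negf sum_divide_distrib[symmetric])
    finally have "exp A * (\<Prod>i\<in>I. exp (- real (y i) / real N)) = exp (A - real (\<Sum>i\<in>I. y i) / real N)"
      by (simp add: mult_exp_exp)
    moreover have "real (\<Sum>i\<in>I. y i) < real N * A \<Longrightarrow> 1 \<le> exp (A - real (\<Sum>i\<in>I. y i) / real N)"
      using assms by (simp add: field_simps)
    ultimately show ?thesis by auto
  qed
  then have "E ?P (\<lambda>y. if real (\<Sum>i\<in>I. y i) < real N * A then 1 else 0)
      \<le> E ?P (\<lambda>y. exp A * (\<Prod>i\<in>I. exp (- real (y i) / real N)))"
    using assms by (intro expectation_mono_finite finite_set_Pi_pmf)
  also have "\<dots> = exp A * E ?P (\<lambda>y. \<Prod>i\<in>I. exp (- real (y i) / real N))"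
    by simp
  also have "E ?P (\<lambda>y. \<Prod>i\<in>I. exp (- real (y i) / real N)) = (\<Prod>i\<in>I. E q (\<lambda>k. exp (- real k / real N)))"
    using assms by (intro expectation_prod_Pi_pmf) (auto intro: integrable_measure_pmf_finite)
  finally show ?thesis by simp
qed

lemma inverse_square_max_le:
  assumes "0 < A" "1 \<le> N"
  shows "1 / real (max (2 * N) R) ^ 2
    \<le> 1 / (real N * A)\<^sup>2 + (if real R < real N * A then 1 / (4 * (real N)\<^sup>2) else 0)"
proof (cases "real R < real N * A")
  case True
  have "1 / real (max (2 * N) R) ^ 2 \<le> 1 / real (2 * N) ^ 2"
    using assms by (intro divide_left_mono power_mono) auto
  then show ?thesis using True by (simp add: add_increasing power2_eq_square)
next
  case False
  have "1 / real (max (2 * N) R) ^ 2 \<le> 1 / (real N * A)\<^sup>2"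
    using assms False by (intro divide_left_mono power_mono) (auto intro!: mult_pos_pos)
  then show ?thesis using False by simp
qed

lemma half_le_one_minus_exp_neg:
  fixes y :: real
  assumes "0 \<le> y" "y \<le> 1"
  shows "y / 2 \<le> 1 - exp (- y)"
proof -
  have "exp (- y) \<le> 1 / (1 + y)"
    using exp_ge_add_one_self[of y] assms by (simp add: exp_minus field_simps)
  also have "1 / (1 + y) \<le> 1 - y / 2"
  proof -
    have "y * y \<le> 1 * y"
      using assms by (intro mult_right_mono) auto
    then have "1 \<le> (1 - y / 2) * (1 + y)"
      by (simp add: algebra_simps)
    then show ?thesis
      using assms by (simp add: divide_le_eq)
  qed
  finally show ?thesis by simp
qed

context powerlaw_pmf
begin

lemma pmf_ge_inverse_a1:
  assumes "a = 1" "2 \<le> k" "k \<le> z"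
  shows "g0 / (real k * (real k + 1)) \<le> pmf p k"
proof -
  have "real k powr (-a) - real (k + 1) powr (-a) = 1 / (real k * (real k + 1))"
    using assms by (simp add: powr_minus_divide field_simps)
  then show ?thesis
    using pmf_lower[of k] assms by simp
qed

lemma pmf_times_capped_share_le_a1:
  assumes "a = 1" "1 \<le> M"
  shows "pmf p k * capped_share k M ^ 2
    \<le> (if k \<le> M then (B + 1) / (real M)\<^sup>2 else 0) + (if M < k then pmf p k else 0)"
proof (cases "k \<le> M")
  case True
  then have share: "capped_share k M = real k / real M"
    unfolding capped_share_def using assms by auto
  have "pmf p k * (real k / real M)\<^sup>2 \<le> (B + 1) / (real M)\<^sup>2"
  proof (cases "k < 2")
    case True
    then have "pmf p k * (real k / real M)\<^sup>2 \<le> 1 * (1 / real M)\<^sup>2"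
      using assms by (intro mult_mono power_mono divide_right_mono) (auto simp: pmf_le_1)
    also have "\<dots> \<le> (B + 1) / (real M)\<^sup>2"
      using B_pos by (simp add: power_divide divide_right_mono)
    finally show ?thesis .
  next
    case False
    have "pmf p k * (real k / real M)\<^sup>2 \<le> (B / (real k)\<^sup>2) * (real k / real M)\<^sup>2"
      using pmf_le_inverse_power[of 1 k] assms False by (intro mult_right_mono) (auto simp: power2_eq_square)
    also have "\<dots> = B / (real M)\<^sup>2"
      using False by (simp add: power_divide)
    also have "\<dots> \<le> (B + 1) / (real M)\<^sup>2"
      by (intro divide_right_mono) auto
    finally show ?thesis .
  qed
  then show ?thesis using share True by simp
next
  case False
  have "pmf p k * capped_share k M ^ 2 \<le> pmf p k * 1"
    using capped_share_nonneg[of k M] capped_share_le_1[of k M]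
    by (intro mult_left_mono) (auto simp: power_le_one)
  then show ?thesis using False by simp
qed

lemma capped_share_moment_le_inverse:
  assumes "a = 1" "1 \<le> M"
  shows "capped_share_moment p M \<le> (3 * B + 2) / real M"
proof -
  have pointwise: "pmf p k * capped_share k M ^ 2
      \<le> (if k \<le> M then (B + 1) / (real M)\<^sup>2 else 0) + (if M < k then pmf p k else 0)" for k
    using pmf_times_capped_share_le_a1[OF assms] .
  have "capped_share_moment p M
      \<le> (\<Sum>k\<le>z. (if k \<le> M then (B + 1) / (real M)\<^sup>2 else 0)) + (\<Sum>k\<le>z. if M < k then pmf p k else 0)"
    unfolding capped_share_moment_def expectation_eq_sum sum.distrib[symmetric]
    by (intro sum_mono pointwise)
  also have "(\<Sum>k\<le>z. (if k \<le> M then (B + 1) / (real M)\<^sup>2 else 0))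
      = (\<Sum>k\<in>{..z} \<inter> {..M}. (B + 1) / (real M)\<^sup>2)"
    by (subst sum.inter_restrict) auto
  also have "\<dots> \<le> (\<Sum>k\<le>M. (B + 1) / (real M)\<^sup>2)"
    using B_pos by (intro sum_mono2) auto
  also have "\<dots> = (real M + 1) * (B + 1) / (real M)\<^sup>2"
    by simp
  also have "\<dots> \<le> 2 * (B + 1) / real M"
  proof -
    have "(real M + 1) * (B + 1) \<le> (2 * real M) * (B + 1)"
      using assms B_pos by (intro mult_right_mono) auto
    then have "(real M + 1) * (B + 1) / (real M)\<^sup>2 \<le> (2 * real M) * (B + 1) / (real M)\<^sup>2"
      by (intro divide_right_mono) auto
    then show ?thesis
      using assms by (simp add: power2_eq_square)
  qed
  also have "(\<Sum>k\<le>z. if M < k then pmf p k else 0) = (\<Sum>k\<in>{Suc M..z}. pmf p k)"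
    by (rule sum.mono_neutral_cong_right) auto
  also have "\<dots> \<le> B * real (Suc M) powr (-a)"
    using assms by (intro tail_sum_le) auto
  also have "\<dots> \<le> B / real M"
    using assms B_pos by (simp add: powr_minus_divide divide_left_mono)
  finally show ?thesis
    by (simp add: add_divide_distrib[symmetric] algebra_simps)
qed

lemma expectation_exp_neg_le:
  assumes "a = 1" "1 \<le> N"
  shows "E p (\<lambda>k. exp (- real k / real N)) \<le> exp (- (g0 / (2 * real N)) * ln ((real (min N z) + 2) / 3))"
proof -
  define K where "K = min N z"
  define lin where "lin = (\<lambda>k. if 2 \<le> k \<and> k \<le> K then real k / (2 * real N) else 0)"
  have lin_le: "lin k \<le> 1 - exp (- real k / real N)" for k
    using half_le_one_minus_exp_neg[of "real k / real N"] assms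
    unfolding lin_def K_def by (auto simp: divide_le_eq_1)
  have "E p lin \<le> E p (\<lambda>k. 1 - exp (- real k / real N))"
    using finite_support lin_le by (intro expectation_mono_finite)
  then have upper: "E p (\<lambda>k. exp (- real k / real N)) \<le> 1 - E p lin"
    using finite_support by (simp add: Bochner_Integration.integral_diff integrable_measure_pmf_finite)
  have "g0 / (2 * real N) * (1 / (real k + 1)) \<le> pmf p k * (real k / (2 * real N))"
    if k: "k \<in> {2..K}" for k
  proof -
    have "g0 / (real k * (real k + 1)) * (real k / (2 * real N)) \<le> pmf p k * (real k / (2 * real N))"
      using pmf_ge_inverse_a1[OF assms(1), of k] k by (intro mult_right_mono) (auto simp: K_def)
    moreover have "g0 / (real k * (real k + 1)) * (real k / (2 * real N))
        = (real k * g0) / (real k * ((real k + 1) * (2 * real N)))"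
      by (simp add: ac_simps)
    moreover have "\<dots> = g0 / (2 * real N) * (1 / (real k + 1))"
      using k by (subst mult_divide_mult_cancel_left) auto
    ultimately show ?thesis by simp
  qed
  then have "(\<Sum>k\<in>{2..K}. g0 / (2 * real N) * (1 / (real k + 1)))
      \<le> (\<Sum>k\<in>{2..K}. pmf p k * (real k / (2 * real N)))"
    by (rule sum_mono)
  then have "g0 / (2 * real N) * (\<Sum>k\<in>{2..K}. 1 / (real k + 1))
      \<le> (\<Sum>k\<in>{2..K}. pmf p k * (real k / (2 * real N)))"
    by (simp only: sum_distrib_left)
  also have "\<dots> = E p lin"
    unfolding expectation_eq_sum lin_def by (rule sum.mono_neutral_cong_left) (auto simp: K_def)
  finally have "g0 / (2 * real N) * ln ((real K + 2) / 3) \<le> E p lin"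
    using g0_pos assms ln_le_harmonic_tail[of K] by (meson order_trans mult_left_mono zero_le_divide_iff
        less_imp_le of_nat_0_le_iff mult_nonneg_nonneg zero_le_numeral)
  then have "E p (\<lambda>k. exp (- real k / real N)) \<le> 1 + (- (g0 / (2 * real N) * ln ((real K + 2) / 3)))"
    using upper by linarith
  also have "\<dots> \<le> exp (- (g0 / (2 * real N) * ln ((real K + 2) / 3)))"
    by (rule exp_ge_add_one_self[simplified add.commute])
  finally show ?thesis unfolding K_def by simp
qed

lemma expectation_merger_term_le_chernoff:
  assumes "a = 1" "2 \<le> N" "0 < A"
  shows "E (Pi_pmf {..<N} 0 (\<lambda>_. p)) (merger_term N) \<le> (3 * B + 2)\<^sup>2 * (1 / (real N * A)\<^sup>2 +
      1 / (4 * (real N)\<^sup>2) * (exp A * (exp (- (g0 / (2 * real N)) * ln ((real (min N z) + 2) / 3))) ^ (N - 2)))"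
proof -
  let ?P = "Pi_pmf {2..<N} 0 (\<lambda>_. p)"
  let ?R = "\<lambda>y. \<Sum>i\<in>{2..<N}. y i"
  define X where "X = (exp (- (g0 / (2 * real N)) * ln ((real (min N z) + 2) / 3))) ^ (N - 2)"
  have finite_P: "finite (set_pmf ?P)"
    using finite_support by (intro finite_set_Pi_pmf) auto
  have "capped_share_moment p (max (2 * N) (?R y)) ^ 2 \<le> (3 * B + 2)\<^sup>2 * (1 / real (max (2 * N) (?R y)) ^ 2)"
    for y
  proof -
    have "capped_share_moment p (max (2 * N) (?R y)) \<le> (3 * B + 2) / real (max (2 * N) (?R y))"
      using assms by (intro capped_share_moment_le_inverse) auto
    then have "capped_share_moment p (max (2 * N) (?R y)) ^ 2 \<le> ((3 * B + 2) / real (max (2 * N) (?R y)))\<^sup>2"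
      using capped_share_moment_nonneg by (intro power_mono) auto
    then show ?thesis
      by (simp add: power_divide)
  qed
  then have "E (Pi_pmf {..<N} 0 (\<lambda>_. p)) (merger_term N)
      \<le> E ?P (\<lambda>y. (3 * B + 2)\<^sup>2 * (1 / real (max (2 * N) (?R y)) ^ 2))"
    using expectation_merger_term_le[OF assms(2) finite_support] finite_P
    by (meson expectation_mono_finite order_trans)
  also have "\<dots> = (3 * B + 2)\<^sup>2 * E ?P (\<lambda>y. 1 / real (max (2 * N) (?R y)) ^ 2)"
    by (rule integral_mult_right_zero)
  also have "1 / real (max (2 * N) (?R y)) ^ 2
      \<le> 1 / (real N * A)\<^sup>2 + 1 / (4 * (real N)\<^sup>2) * (if real (?R y) < real N * A then 1 else 0)" for y
    using inverse_square_max_le[of A N "?R y"] assms by (auto split: if_splits)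
  then have "E ?P (\<lambda>y. 1 / real (max (2 * N) (?R y)) ^ 2)
      \<le> E ?P (\<lambda>y. 1 / (real N * A)\<^sup>2 + 1 / (4 * (real N)\<^sup>2) * (if real (?R y) < real N * A then 1 else 0))"
    by (intro expectation_mono_finite finite_P)
  also have "\<dots> = 1 / (real N * A)\<^sup>2 + 1 / (4 * (real N)\<^sup>2) * E ?P (\<lambda>y. if real (?R y) < real N * A then 1 else 0)"
    using finite_P by (simp add: integrable_measure_pmf_finite)
  also have "E ?P (\<lambda>y. if real (?R y) < real N * A then 1 else 0)
      \<le> exp A * (E p (\<lambda>k. exp (- real k / real N))) ^ card {2..<N}"
    using assms finite_support by (intro chernoff_lower_tail) auto
  also have "\<dots> \<le> exp A * X"
    unfolding X_def using expectation_exp_neg_le[OF assms(1), of N] assms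
    by (auto intro!: mult_left_mono power_mono expectation_nonneg_pmf)
  finally show ?thesis
    unfolding X_def by (simp add: mult_left_mono divide_right_mono)
qed

lemma expectation_merger_term_le_log:
  assumes "a = 1" "9 \<le> N" "3 * sqrt (real N) \<le> real z"
  shows "E (Pi_pmf {..<N} 0 (\<lambda>_. p)) (merger_term N) \<le> (3 * B + 2)\<^sup>2 *
    (256 / (g0\<^sup>2 * (real N)\<^sup>2 * (ln (real N))\<^sup>2) + real N powr (- (g0 / 16)) / (4 * (real N)\<^sup>2))"
proof -
  define l where "l = ln ((real (min N z) + 2) / 3)"
  define A where "A = g0 / 8 * l"
  have N: "0 < real N" "0 < ln (real N)" "2 \<le> N"
    using assms by auto
  have "3 * sqrt (real N) \<le> sqrt (real N) * sqrt (real N)"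
    using assms real_sqrt_le_mono[of 9 "real N"] by (intro mult_right_mono) auto
  then have "sqrt (real N) \<le> (real (min N z) + 2) / 3"
    using assms by auto
  then have "ln (sqrt (real N)) \<le> l"
    unfolding l_def using N by (intro ln_mono) auto
  then have l: "ln (real N) / 2 \<le> l"
    using N by (simp add: ln_sqrt)
  have l_pos: "0 < l"
    using l N(2) by linarith
  then have A: "0 < A"
    unfolding A_def using g0_pos by simp
  have NA: "real N * g0 * ln (real N) / 16 \<le> real N * A"
    unfolding A_def using N g0_pos l by (simp add: field_simps)
  have first: "1 / (real N * A)\<^sup>2 \<le> 256 / (g0\<^sup>2 * (real N)\<^sup>2 * (ln (real N))\<^sup>2)"
  proof -
    have "1 / (real N * A)\<^sup>2 \<le> 1 / (real N * g0 * ln (real N) / 16)\<^sup>2"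
      using N A NA g0_pos by (intro divide_left_mono power_mono mult_pos_pos) auto
    then show ?thesis by (simp add: power_divide power_mult_distrib mult_ac)
  qed
  have "A + real (N - 2) * (- (g0 / (2 * real N)) * l) \<le> - (g0 * l) / 8"
  proof -
    have "1 / 4 \<le> real (N - 2) / (2 * real N)"
      using assms by (simp add: field_simps of_nat_diff)
    then have "g0 * l * (1 / 4) \<le> g0 * l * (real (N - 2) / (2 * real N))"
      by (rule mult_left_mono) (use g0_pos l_pos in simp)
    then show ?thesis
      unfolding A_def using N by (simp add: field_simps)
  qed
  also have "- (g0 * l) / 8 \<le> - (g0 / 16) * ln (real N)"
    using l g0_pos by (simp add: mult_left_mono)
  finally have "exp A * (exp (- (g0 / (2 * real N)) * l)) ^ (N - 2) \<le> exp (- (g0 / 16) * ln (real N))"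
    by (simp add: mult_exp_exp flip: exp_of_nat_mult)
  also have "\<dots> = real N powr (- (g0 / 16))"
    using N by (simp add: powr_def)
  finally have second: "1 / (4 * (real N)\<^sup>2) * (exp A * (exp (- (g0 / (2 * real N)) * l)) ^ (N - 2))
      \<le> real N powr (- (g0 / 16)) / (4 * (real N)\<^sup>2)"
    by (simp add: divide_right_mono)
  show ?thesis
    using expectation_merger_term_le_chernoff[OF assms(1) N(3) A(1)] first second
    unfolding l_def[symmetric]
    by (smt (verit, best) mult_left_mono zero_le_power2)
qed

end

section \<open>Bounding the denominator\<close>

lemma nu1_fact2_nonneg: "0 \<le> nu1_fact2 N x"
  unfolding nu1_fact2_def
  by (auto intro!: sum_nonneg divide_nonneg_nonneg mult_nonneg_nonneg falling_factorial_2_nonneg)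

lemma binomial_ratio_minus_2:
  assumes "2 \<le> n" "n \<le> S"
  shows "real ((S - 2) choose (n - 2)) / real (S choose n) = real n * (real n - 1) / (real S * (real S - 1))"
proof -
  obtain m where m: "S = Suc (Suc m)" using assms by (metis add_2_eq_Suc le_Suc_ex le_trans)
  obtain j where j: "n = Suc (Suc j)" using assms by (metis add_2_eq_Suc le_Suc_ex)
  have "Suc (Suc j) * Suc j * (Suc (Suc m) choose Suc (Suc j)) = Suc (Suc m) * Suc m * (m choose j)"
    by (metis Suc_times_binomial mult.assoc mult.commute)
  then have "real (Suc (Suc j)) * real (Suc j) * real (Suc (Suc m) choose Suc (Suc j))
      = real (Suc (Suc m)) * real (Suc m) * real (m choose j)"
    by (metis of_nat_mult)
  then have "real n * (real n - 1) * real (S choose n) = real S * (real S - 1) * real ((S - 2) choose (n - 2))"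
    using m j by simp
  moreover have "real (S choose n) \<noteq> 0" "real S * (real S - 1) \<noteq> 0"
    using assms by auto
  ultimately show ?thesis
    by (simp add: frac_eq_eq del: binomial_Suc_Suc)
qed

text \<open>With \<open>x 0 = 2\<close>, \<open>\<nu>\<^sub>1(\<nu>\<^sub>1 - 1)\<close> is \<open>2\<close> if both offspring of pair 1 survive and \<open>0\<close> otherwise;
  only the summand \<open>k = 2\<close> of the hypergeometric expectation remains.\<close>

lemma nu1_fact2_at_2:
  assumes "x 0 = 2" "2 * N \<le> S_tot N x" "1 \<le> N"
  shows "nu1_fact2 N x = 2 * (real (2 * N) * (real (2 * N) - 1)) / (real (S_tot N x) * (real (S_tot N x) - 1))"
proof -
  define S where "S = S_tot N x"
  let ?f = "\<lambda>k. real k * (real k - 1) * real (x 0 choose k) * real ((S - x 0) choose (2 * N - k))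
    / real (S choose (2 * N))"
  have vanish: "?f i = 0" if "i \<noteq> 2" for i
  proof (cases "i \<le> 1")
    case True
    then have "real i * (real i - 1) = 0" by (cases i) auto
    then show ?thesis by simp
  next
    case False
    then show ?thesis using that assms by simp
  qed
  have "nu1_fact2 N x = (\<Sum>k\<le>2 * N. ?f k)"
    unfolding nu1_fact2_def S_def using assms by simp
  also have "\<dots> = ?f 2"
    using assms vanish by (subst sum.mono_neutral_cong_right[of _ "{2}"]) auto
  also have "\<dots> = 2 * (real ((S - 2) choose (2 * N - 2)) / real (S choose (2 * N)))"
    using assms by simp
  also have "\<dots> = 2 * (real (2 * N) * (real (2 * N) - 1) / (real S * (real S - 1)))"
    using assms by (subst binomial_ratio_minus_2) (auto simp: S_def)
  finally show ?thesis unfolding S_def by simp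
qed

lemma S_tot_update_0:
  assumes "1 \<le> N"
  shows "S_tot N (y(0 := a)) = a + (\<Sum>i\<in>{1..<N}. y i)"
proof -
  have "{..<N} = insert 0 {1..<N}" using assms by auto
  then have "S_tot N (y(0 := a)) = a + (\<Sum>i\<in>{1..<N}. (y(0 := a)) i)"
    unfolding S_tot_def by simp
  also have "(\<Sum>i\<in>{1..<N}. (y(0 := a)) i) = (\<Sum>i\<in>{1..<N}. y i)"
    by (intro sum.cong) auto
  finally show ?thesis .
qed

lemma nu1_fact2_ge_if_moderate:
  assumes "1 \<le> N" "0 < K" "2 * (N - 1) \<le> W" "real (2 + W) \<le> K * real N"
    "(\<Sum>i\<in>{1..<N}. y i) = W"
  shows "4 / K\<^sup>2 \<le> nu1_fact2 N (y(0 := 2))"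
proof -
  define S where "S = 2 + W"
  have S: "S_tot N (y(0 := 2)) = S" "2 * N \<le> S" "real S \<le> K * real N"
    unfolding S_def using S_tot_update_0[OF assms(1)] assms by auto
  have "4 * (real N)\<^sup>2 / (K * real N)\<^sup>2 \<le> 4 * (real N)\<^sup>2 / (real S)\<^sup>2"
    using S assms by (intro divide_left_mono power_mono mult_pos_pos) auto
  also have "\<dots> = 2 * (real (2 * N) * real N) / (real S * real S)"
    by (simp add: power2_eq_square)
  also have "\<dots> \<le> 2 * (real (2 * N) * (real (2 * N) - 1)) / (real S * (real S - 1))"
    using S assms by (intro frac_le mult_left_mono mult_mono mult_pos_pos) auto
  also have "\<dots> = nu1_fact2 N (y(0 := 2))"
    using nu1_fact2_at_2[of "y(0 := 2)" N] S assms by simp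
  finally show ?thesis
    using assms by (simp add: power_mult_distrib)
qed

lemma expectation_nu1_fact2_ge:
  assumes "1 \<le> N" "finite (set_pmf q)" "0 < K"
  shows "pmf q 2 * (4 / K\<^sup>2) * E (Pi_pmf {1..<N} 0 (\<lambda>_. q))
      (\<lambda>y. if 2 * (N - 1) \<le> (\<Sum>i\<in>{1..<N}. y i) \<and> real (2 + (\<Sum>i\<in>{1..<N}. y i)) \<le> K * real N then 1 else 0)
    \<le> E (Pi_pmf {..<N} 0 (\<lambda>_. q)) (nu1_fact2 N)"
proof -
  let ?P = "Pi_pmf {1..<N} 0 (\<lambda>_. q)"
  let ?W = "\<lambda>y. \<Sum>i\<in>{1..<N}. y i"
  have finite_P: "finite (set_pmf ?P)"
    using assms by (intro finite_set_Pi_pmf) auto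
  have "(4 / K\<^sup>2) * (if 2 * (N - 1) \<le> ?W y \<and> real (2 + ?W y) \<le> K * real N then 1 else 0)
      \<le> nu1_fact2 N (y(0 := 2))" for y
    using nu1_fact2_ge_if_moderate[OF assms(1,3), of "?W y" y] nu1_fact2_nonneg[of N "y(0 := 2)"] by auto
  then have "(4 / K\<^sup>2) * E ?P (\<lambda>y. if 2 * (N - 1) \<le> ?W y \<and> real (2 + ?W y) \<le> K * real N then 1 else 0)
      \<le> E ?P (\<lambda>y. nu1_fact2 N (y(0 := 2)))"
    using finite_P by (subst integral_mult_right_zero[symmetric]) (intro expectation_mono_finite)
  then have "pmf q 2 * ((4 / K\<^sup>2) * E ?P (\<lambda>y. if 2 * (N - 1) \<le> ?W y \<and> real (2 + ?W y) \<le> K * real N then 1 else 0))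
      \<le> pmf q 2 * E ?P (\<lambda>y. nu1_fact2 N (y(0 := 2)))"
    by (intro mult_left_mono) auto
  also have "\<dots> \<le> E q (\<lambda>a. E ?P (\<lambda>y. nu1_fact2 N (y(0 := a))))"
    using assms finite_P by (intro pmf_times_le_expectation expectation_nonneg_pmf nu1_fact2_nonneg) auto
  also have "\<dots> = E (Pi_pmf {..<N} 0 (\<lambda>_. q)) (nu1_fact2 N)"
  proof -
    have "{..<N} = insert 0 {1..<N}" using assms by auto
    then show ?thesis using assms by (simp add: expectation_Pi_pmf_insert)
  qed
  finally show ?thesis by (simp add: mult.assoc)
qed

section \<open>Anti-concentration of sums of i.i.d. variables\<close>

definition iid_sum_moment :: "nat pmf \<Rightarrow> (nat \<Rightarrow> real) \<Rightarrow> 'i set \<Rightarrow> nat \<Rightarrow> real" where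
  "iid_sum_moment q D I m = E (Pi_pmf I 0 (\<lambda>_. q)) (\<lambda>y. (\<Sum>i\<in>I. D (y i)) ^ m)"

lemma iid_sum_moment_insert:
  assumes "finite I" "j \<notin> I" "finite (set_pmf q)"
  shows "iid_sum_moment q D (insert j I) m
    = (\<Sum>k\<le>m. real (m choose k) * E q (\<lambda>a. D a ^ k) * iid_sum_moment q D I (m - k))"
proof -
  let ?P = "Pi_pmf I 0 (\<lambda>_. q)"
  have finite_P: "finite (set_pmf ?P)"
    using assms by (intro finite_set_Pi_pmf) auto
  have sum_update: "(\<Sum>i\<in>insert j I. D ((y(j := a)) i)) = D a + (\<Sum>i\<in>I. D (y i))" for y a
  proof -
    have "(\<Sum>i\<in>I. D ((y(j := a)) i)) = (\<Sum>i\<in>I. D (y i))"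
      using assms by (intro sum.cong) auto
    then show ?thesis using assms by simp
  qed
  have "iid_sum_moment q D (insert j I) m = E q (\<lambda>a. E ?P (\<lambda>y. (\<Sum>i\<in>insert j I. D ((y(j := a)) i)) ^ m))"
    unfolding iid_sum_moment_def using assms by (subst expectation_Pi_pmf_insert) auto
  also have "\<dots> = E q (\<lambda>a. E ?P (\<lambda>y. \<Sum>k\<le>m. real (m choose k) * D a ^ k * (\<Sum>i\<in>I. D (y i)) ^ (m - k)))"
    unfolding sum_update binomial_ring by simp
  also have "\<dots> = (\<Sum>k\<le>m. real (m choose k) * E q (\<lambda>a. D a ^ k) * iid_sum_moment q D I (m - k))"
    unfolding iid_sum_moment_def using assms finite_P by (simp add: expectation_sum_finite)
  finally show ?thesis .
qed

lemma iid_sum_moments_centered: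
  assumes "finite I" "finite (set_pmf q)" "E q D = 0"
  shows "iid_sum_moment q D I 1 = 0"
    and "iid_sum_moment q D I 2 = real (card I) * E q (\<lambda>a. D a ^ 2)"
    and "iid_sum_moment q D I 4 = real (card I) * E q (\<lambda>a. D a ^ 4)
      + 3 * real (card I) * (real (card I) - 1) * (E q (\<lambda>a. D a ^ 2))\<^sup>2"
proof -
  have moment_0: "iid_sum_moment q D J 0 = 1" for J :: "'a set"
    unfolding iid_sum_moment_def by simp
  have "iid_sum_moment q D I 1 = 0 \<and> iid_sum_moment q D I 2 = real (card I) * E q (\<lambda>a. D a ^ 2) \<and>
    iid_sum_moment q D I 4 = real (card I) * E q (\<lambda>a. D a ^ 4)
      + 3 * real (card I) * (real (card I) - 1) * (E q (\<lambda>a. D a ^ 2))\<^sup>2"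
    using assms(1)
  proof (induction rule: finite_induct)
    case empty
    then show ?case by (simp add: iid_sum_moment_def)
  next
    case (insert j I)
    note step = iid_sum_moment_insert[OF insert(1,2) assms(2), of D]
    have "iid_sum_moment q D (insert j I) 1 = 0"
      unfolding step using insert assms by (simp add: moment_0)
    moreover have "iid_sum_moment q D (insert j I) 2 = real (card (insert j I)) * E q (\<lambda>a. D a ^ 2)"
      unfolding step using insert assms by (simp add: moment_0 numeral_eq_Suc atMost_Suc algebra_simps)
    moreover have "iid_sum_moment q D (insert j I) 4 = real (card (insert j I)) * E q (\<lambda>a. D a ^ 4)
        + 3 * real (card (insert j I)) * (real (card (insert j I)) - 1) * (E q (\<lambda>a. D a ^ 2))\<^sup>2"
      unfolding step using insert assms
      by (simp add: moment_0 numeral_eq_Suc atMost_Suc algebra_simps power2_eq_square)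
    ultimately show ?case by blast
  qed
  then show "iid_sum_moment q D I 1 = 0"
    and "iid_sum_moment q D I 2 = real (card I) * E q (\<lambda>a. D a ^ 2)"
    and "iid_sum_moment q D I 4 = real (card I) * E q (\<lambda>a. D a ^ 4)
      + 3 * real (card I) * (real (card I) - 1) * (E q (\<lambda>a. D a ^ 2))\<^sup>2"
    by blast+
qed

lemma expectation_square_cube_le:
  assumes "finite (set_pmf M)"
  shows "(E M (\<lambda>x. (Z x)\<^sup>2)) ^ 3 \<le> (E M (\<lambda>x. \<bar>Z x\<bar>))\<^sup>2 * E M (\<lambda>x. (Z x) ^ 4)"
proof -
  let ?a = "E M (\<lambda>x. \<bar>Z x\<bar>)" and ?b = "E M (\<lambda>x. (Z x)\<^sup>2)"
    and ?c = "E M (\<lambda>x. \<bar>Z x\<bar> ^ 3)" and ?d = "E M (\<lambda>x. (Z x) ^ 4)"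
  have sqrt_split: "sqrt \<bar>Z x\<bar> * (\<bar>Z x\<bar> * sqrt \<bar>Z x\<bar>) = (Z x)\<^sup>2" for x
  proof -
    have "sqrt \<bar>Z x\<bar> * (\<bar>Z x\<bar> * sqrt \<bar>Z x\<bar>) = \<bar>Z x\<bar> * (sqrt \<bar>Z x\<bar> * sqrt \<bar>Z x\<bar>)"
      by (simp only: ac_simps)
    also have "\<dots> = (Z x)\<^sup>2"
      by (simp only: real_sqrt_mult_self abs_abs abs_mult_self_eq power2_eq_square)
    finally show ?thesis .
  qed
  have cube: "(\<bar>Z x\<bar> * sqrt \<bar>Z x\<bar>)\<^sup>2 = \<bar>Z x\<bar> ^ 3" "\<bar>Z x\<bar> * (Z x)\<^sup>2 = \<bar>Z x\<bar> ^ 3" for x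
  proof -
    show "(\<bar>Z x\<bar> * sqrt \<bar>Z x\<bar>)\<^sup>2 = \<bar>Z x\<bar> ^ 3"
      by (simp only: power_mult_distrib real_sqrt_pow2[OF abs_ge_zero]) (simp add: power2_eq_square power3_eq_cube)
    show "\<bar>Z x\<bar> * (Z x)\<^sup>2 = \<bar>Z x\<bar> ^ 3"
      by (simp add: power2_eq_square power3_eq_cube abs_mult_self_eq)
  qed
  have bc: "?b\<^sup>2 \<le> ?a * ?c"
    using expectation_Cauchy_Schwarz[OF assms, of "\<lambda>x. sqrt \<bar>Z x\<bar>" "\<lambda>x. \<bar>Z x\<bar> * sqrt \<bar>Z x\<bar>"]
    by (simp only: sqrt_split cube real_sqrt_pow2[OF abs_ge_zero])
  have cd: "?c\<^sup>2 \<le> ?b * ?d"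
    using expectation_Cauchy_Schwarz[OF assms, of "\<lambda>x. \<bar>Z x\<bar>" "\<lambda>x. (Z x)\<^sup>2"]
    by (simp only: cube power2_abs power_mult[symmetric] numeral_times_numeral semiring_norm)
  have nonneg: "0 \<le> ?a" "0 \<le> ?b" "0 \<le> ?d"
    by (auto intro!: expectation_nonneg_pmf)
  show ?thesis
  proof (cases "?b = 0")
    case True
    then show ?thesis using nonneg by simp
  next
    case False
    have "?b * ?b ^ 3 = (?b\<^sup>2)\<^sup>2"
      by (simp add: power2_eq_square power3_eq_cube)
    also have "\<dots> \<le> (?a * ?c)\<^sup>2"
      using bc by (intro power_mono) auto
    also have "\<dots> = ?a\<^sup>2 * ?c\<^sup>2"
      by (simp add: power_mult_distrib)
    also have "\<dots> \<le> ?a\<^sup>2 * (?b * ?d)"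
      using cd by (intro mult_left_mono) auto
    finally have "?b * ?b ^ 3 \<le> ?b * (?a\<^sup>2 * ?d)"
      by (simp add: algebra_simps)
    then show ?thesis
      using nonneg False by simp
  qed
qed

lemma paley_zygmund_centered:
  assumes "finite (set_pmf M)" "E M Z = 0" "0 \<le> t" "t \<le> E M (\<lambda>x. \<bar>Z x\<bar>) / 2"
  shows "(E M (\<lambda>x. \<bar>Z x\<bar>) / 2 - t)\<^sup>2 \<le> E M (\<lambda>x. (Z x)\<^sup>2) * E M (\<lambda>x. if t \<le> Z x then 1 else 0)"
proof -
  have integrable: "integrable M f" for f :: "_ \<Rightarrow> real"
    using assms(1) by (rule integrable_measure_pmf_finite)
  have "E M (\<lambda>x. \<bar>Z x\<bar>) = E M (\<lambda>x. 2 * max (Z x) 0 - Z x)"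
    by (intro Bochner_Integration.integral_cong) auto
  then have half: "E M (\<lambda>x. \<bar>Z x\<bar>) / 2 = E M (\<lambda>x. max (Z x) 0)"
    using assms by (simp add: integrable)
  have "E M (\<lambda>x. max (Z x) 0) \<le> E M (\<lambda>x. t + Z x * (if t \<le> Z x then 1 else 0))"
    using assms by (intro expectation_mono_finite) auto
  then have "E M (\<lambda>x. \<bar>Z x\<bar>) / 2 - t \<le> E M (\<lambda>x. Z x * (if t \<le> Z x then 1 else 0))"
    using half by (simp add: integrable)
  then have "(E M (\<lambda>x. \<bar>Z x\<bar>) / 2 - t)\<^sup>2 \<le> (E M (\<lambda>x. Z x * (if t \<le> Z x then 1 else 0)))\<^sup>2"
    using assms by (intro power_mono) auto
  also have "\<dots> \<le> E M (\<lambda>x. (Z x)\<^sup>2) * E M (\<lambda>x. (if t \<le> Z x then 1 else 0)\<^sup>2)"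
    by (rule expectation_Cauchy_Schwarz[OF assms(1)])
  also have "E M (\<lambda>x. (if t \<le> Z x then 1 else 0::real)\<^sup>2) = E M (\<lambda>x. if t \<le> Z x then 1 else 0)"
    by (intro Bochner_Integration.integral_cong) auto
  finally show ?thesis .
qed

text \<open>The Hoelder-type bound \<open>(E|Z|)\<^sup>2 \<ge> (EZ\<^sup>2)\<^sup>3 / EZ\<^sup>4\<close> pushes the threshold below \<open>E|Z| / 4\<close>,
  where the Paley-Zygmund estimate applies.\<close>

lemma centered_upper_tail_ge:
  assumes "finite (set_pmf M)" "E M Z = 0" "0 < E M (\<lambda>x. (Z x)\<^sup>2)" "E M (\<lambda>x. (Z x) ^ 4) \<le> V4"
    "0 \<le> t" "16 * t\<^sup>2 * V4 \<le> (E M (\<lambda>x. (Z x)\<^sup>2)) ^ 3"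
  shows "(E M (\<lambda>x. (Z x)\<^sup>2))\<^sup>2 \<le> 16 * V4 * E M (\<lambda>x. if t \<le> Z x then 1 else 0)"
proof -
  define V2 where "V2 = E M (\<lambda>x. (Z x)\<^sup>2)"
  define A where "A = E M (\<lambda>x. \<bar>Z x\<bar>)"
  define P where "P = E M (\<lambda>x. if t \<le> Z x then 1 else (0::real))"
  have A: "0 \<le> A" unfolding A_def by (intro expectation_nonneg_pmf) auto
  have holder: "V2 ^ 3 \<le> A\<^sup>2 * V4"
    using expectation_square_cube_le[OF assms(1), of Z] assms(4) unfolding A_def V2_def
    by (meson order_trans mult_left_mono zero_le_power2)
  have "0 < A\<^sup>2 * V4"
    using holder assms(3) unfolding V2_def by (meson less_le_trans zero_less_power)
  then have V4: "0 < V4"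
    using zero_le_power2[of A] by (simp add: zero_less_mult_iff)
  have "16 * t\<^sup>2 * V4 \<le> A\<^sup>2 * V4"
    using assms(6) holder unfolding V2_def by linarith
  then have "(4 * t)\<^sup>2 \<le> A\<^sup>2"
    using V4 by (simp add: power_mult_distrib)
  then have tA: "4 * t \<le> A"
    using A by (rule power2_le_imp_le)
  have "(A / 4)\<^sup>2 \<le> (A / 2 - t)\<^sup>2"
    using tA A assms(5) by (intro power_mono) auto
  also have "\<dots> \<le> V2 * P"
    using paley_zygmund_centered[OF assms(1,2,5)] tA A unfolding A_def V2_def P_def by simp
  finally have "A\<^sup>2 * V4 \<le> 16 * (V2 * P) * V4"
    using V4 by (simp add: power_divide)
  with holder have "V2 * V2\<^sup>2 \<le> V2 * (16 * V4 * P)"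
    by (simp add: power3_eq_cube power2_eq_square algebra_simps)
  then show ?thesis
    using assms(3) unfolding V2_def P_def by simp
qed

definition truncate :: "real \<Rightarrow> nat \<Rightarrow> real" where
  "truncate L k = min (real k) L"

definition central_moment :: "'a pmf \<Rightarrow> ('a \<Rightarrow> real) \<Rightarrow> nat \<Rightarrow> real" where
  "central_moment q f m = E q (\<lambda>x. (f x - E q f) ^ m)"

lemma truncate_le: "truncate L k \<le> real k"
  unfolding truncate_def by auto

lemma truncate_nonneg: "0 \<le> L \<Longrightarrow> 0 \<le> truncate L k"
  unfolding truncate_def by auto

lemma square_ratio_mono:
  fixes s x C :: real
  assumes "0 < s" "s \<le> x" "0 \<le> C"
  shows "s\<^sup>2 / (C + 3 * s\<^sup>2) \<le> x\<^sup>2 / (C + 3 * x\<^sup>2)"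
proof -
  have "s\<^sup>2 * C \<le> x\<^sup>2 * C"
    using assms by (intro mult_right_mono power_mono) auto
  then have "s\<^sup>2 * (C + 3 * x\<^sup>2) \<le> x\<^sup>2 * (C + 3 * s\<^sup>2)"
    by (simp add: algebra_simps)
  moreover have "0 < C + 3 * s\<^sup>2" "0 < C + 3 * x\<^sup>2"
    using assms by (auto intro: add_nonneg_pos)
  ultimately show ?thesis by (simp add: divide_simps)
qed

lemma iid_sum_upper_tail_ge:
  fixes q :: "nat pmf" and D :: "nat \<Rightarrow> real" and I :: "'i set"
  defines "n \<equiv> real (card I)" and "\<sigma> \<equiv> E q (\<lambda>a. (D a)\<^sup>2)"
  assumes q: "finite (set_pmf q)" "E q D = 0" and I: "finite I" "I \<noteq> {}"
    and "0 < \<sigma>" "0 \<le> C4" "E q (\<lambda>a. D a ^ 4) \<le> C4 * n"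
    and "0 \<le> u" and small: "16 * n * u\<^sup>2 * (C4 + 3 * \<sigma>\<^sup>2) \<le> \<sigma> ^ 3"
  shows "\<sigma>\<^sup>2 / (16 * (C4 + 3 * \<sigma>\<^sup>2)) \<le> E (Pi_pmf I 0 (\<lambda>_. q)) (\<lambda>y. if n * u \<le> (\<Sum>i\<in>I. D (y i)) then 1 else 0)"
proof -
  let ?M = "Pi_pmf I 0 (\<lambda>_. q)"
  define Z where "Z = (\<lambda>y. \<Sum>i\<in>I. D (y i))"
  define Y where "Y = C4 + 3 * \<sigma>\<^sup>2"
  have n: "1 \<le> n"
    unfolding n_def using I by (simp add: Suc_le_eq card_gt_0_iff)
  have Y: "0 < Y"
    unfolding Y_def using assms by (simp add: add_nonneg_pos)
  note moments = iid_sum_moments_centered[OF I(1) q]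
  have EZ: "E ?M Z = 0"
    using moments(1) unfolding iid_sum_moment_def Z_def by simp
  have EZ2: "E ?M (\<lambda>y. (Z y)\<^sup>2) = n * \<sigma>"
    using moments(2) unfolding iid_sum_moment_def Z_def n_def \<sigma>_def by simp
  have "3 * n * (n - 1) * \<sigma>\<^sup>2 \<le> 3 * n * n * \<sigma>\<^sup>2"
    using n by (intro mult_right_mono mult_left_mono) auto
  then have "E ?M (\<lambda>y. (Z y) ^ 4) \<le> n * E q (\<lambda>a. D a ^ 4) + 3 * n * n * \<sigma>\<^sup>2"
    using moments(3) unfolding iid_sum_moment_def Z_def n_def[symmetric] \<sigma>_def[symmetric] by simp
  also have "\<dots> \<le> n\<^sup>2 * Y"
    using assms n unfolding Y_def by (simp add: power2_eq_square algebra_simps mult_left_mono)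
  finally have EZ4: "E ?M (\<lambda>y. (Z y) ^ 4) \<le> n\<^sup>2 * Y" .
  have "n ^ 3 * (16 * n * u\<^sup>2 * Y) \<le> n ^ 3 * \<sigma> ^ 3"
    using small n unfolding Y_def by (intro mult_left_mono) auto
  moreover have "16 * (n * u)\<^sup>2 * (n\<^sup>2 * Y) = n ^ 3 * (16 * n * u\<^sup>2 * Y)"
    by (simp add: power2_eq_square power3_eq_cube mult_ac)
  ultimately have "16 * (n * u)\<^sup>2 * (n\<^sup>2 * Y) \<le> (E ?M (\<lambda>y. (Z y)\<^sup>2)) ^ 3"
    unfolding EZ2 by (simp only: power_mult_distrib)
  then have "(E ?M (\<lambda>y. (Z y)\<^sup>2))\<^sup>2 \<le> 16 * (n\<^sup>2 * Y) * E ?M (\<lambda>y. if n * u \<le> Z y then 1 else 0)"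
    using assms n by (intro centered_upper_tail_ge[OF _ EZ _ EZ4]) (auto simp: EZ2 finite_set_Pi_pmf)
  then have "n\<^sup>2 * \<sigma>\<^sup>2 \<le> n\<^sup>2 * (16 * Y * E ?M (\<lambda>y. if n * u \<le> Z y then 1 else 0))"
    unfolding EZ2 by (simp add: power_mult_distrib mult_ac)
  then have "\<sigma>\<^sup>2 \<le> 16 * Y * E ?M (\<lambda>y. if n * u \<le> Z y then 1 else 0)"
    using n by simp
  then show ?thesis
    using Y unfolding Y_def Z_def by (simp add: pos_divide_le_eq mult_ac)
qed

lemma sum_ge_twice_of_truncated_deviation_ge:
  fixes y :: "'i \<Rightarrow> nat"
  assumes "2 \<le> \<mu>" "real (card I) * (\<mu> - \<nu>) \<le> (\<Sum>i\<in>I. truncate L (y i) - \<nu>)"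
  shows "2 * card I \<le> (\<Sum>i\<in>I. y i)"
proof -
  have "real (card I) * 2 \<le> real (card I) * \<mu>"
    using assms by (intro mult_left_mono) auto
  also have "\<dots> \<le> (\<Sum>i\<in>I. truncate L (y i))"
    using assms(2) by (simp add: sum_subtractf algebra_simps)
  also have "\<dots> \<le> real (\<Sum>i\<in>I. y i)"
    by (simp add: truncate_le sum_mono)
  finally show ?thesis
    by (simp del: of_nat_sum add: mult.commute)
qed

text \<open>Paley-Zygmund is applied to the centered truncated sum with threshold \<open>n (\<mu> - \<nu>)\<close>, where
  \<open>\<mu>\<close> and \<open>\<nu>\<close> are the plain and the truncated mean; the last assumption makes this threshold
  small compared with the standard deviation of the truncated sum.\<close>

lemma iid_sum_ge_twice_prob_ge:
  fixes p :: "nat pmf" and I :: "'i set"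
  defines "n \<equiv> real (card I)"
  assumes p: "finite (set_pmf p)" "2 < E p real" and I: "finite I" "I \<noteq> {}"
    and constants: "0 < s0" "0 \<le> C4"
    and variance: "s0 \<le> central_moment p (truncate L) 2"
    and fourth: "central_moment p (truncate L) 4 \<le> C4 * n"
    and small: "16 * (C4 / s0 ^ 3 + 3 / s0) * (n * (E p real - E p (truncate L))\<^sup>2) \<le> 1"
  shows "s0\<^sup>2 / (16 * (C4 + 3 * s0\<^sup>2)) \<le> E (Pi_pmf I 0 (\<lambda>_. p)) (\<lambda>y. if 2 * card I \<le> (\<Sum>i\<in>I. y i) then 1 else 0)"
proof -
  define \<mu> where "\<mu> = E p real"
  define \<nu> where "\<nu> = E p (truncate L)"
  define \<sigma> where "\<sigma> = central_moment p (truncate L) 2"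
  have \<sigma>: "s0 \<le> \<sigma>" "0 < \<sigma>"
    using variance constants unfolding \<sigma>_def by auto
  have "\<nu> \<le> \<mu>"
    unfolding \<nu>_def \<mu>_def using p by (intro expectation_mono_finite) (auto simp: truncate_le)
  have "s0\<^sup>2 / (C4 + 3 * s0\<^sup>2) / 16 \<le> \<sigma>\<^sup>2 / (C4 + 3 * \<sigma>\<^sup>2) / 16"
    using square_ratio_mono[OF constants(1) \<sigma>(1) constants(2)] by (rule divide_right_mono) simp
  then have mono: "s0\<^sup>2 / (16 * (C4 + 3 * s0\<^sup>2)) \<le> \<sigma>\<^sup>2 / (16 * (C4 + 3 * \<sigma>\<^sup>2))"
    by (simp only: divide_divide_eq_left mult.commute)
  have "(C4 + 3 * \<sigma>\<^sup>2) / \<sigma> ^ 3 \<le> C4 / s0 ^ 3 + 3 / s0"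
  proof -
    have "C4 / \<sigma> ^ 3 \<le> C4 / s0 ^ 3" "3 / \<sigma> \<le> 3 / s0"
      using \<sigma> constants by (auto intro!: divide_left_mono power_mono)
    then show ?thesis
      using \<sigma> by (simp add: add_divide_distrib power2_eq_square power3_eq_cube)
  qed
  then have "16 * (n * (\<mu> - \<nu>)\<^sup>2) * ((C4 + 3 * \<sigma>\<^sup>2) / \<sigma> ^ 3) \<le> 16 * (n * (\<mu> - \<nu>)\<^sup>2) * (C4 / s0 ^ 3 + 3 / s0)"
    unfolding n_def by (intro mult_left_mono) auto
  also have "\<dots> \<le> 1"
    using small unfolding \<mu>_def \<nu>_def by (simp only: mult.commute mult.left_commute)
  finally have "16 * n * (\<mu> - \<nu>)\<^sup>2 * (C4 + 3 * \<sigma>\<^sup>2) \<le> \<sigma> ^ 3"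
    using \<sigma> by (simp add: pos_divide_le_eq mult.assoc)
  then have "\<sigma>\<^sup>2 / (16 * (C4 + 3 * \<sigma>\<^sup>2))
      \<le> E (Pi_pmf I 0 (\<lambda>_. p)) (\<lambda>y. if n * (\<mu> - \<nu>) \<le> (\<Sum>i\<in>I. truncate L (y i) - \<nu>) then 1 else 0)"
    using iid_sum_upper_tail_ge[of p "\<lambda>k. truncate L k - \<nu>" I C4 "\<mu> - \<nu>"] p I \<sigma> constants fourth
      \<open>\<nu> \<le> \<mu>\<close>
    unfolding n_def \<sigma>_def \<nu>_def central_moment_def by (simp add: integrable_measure_pmf_finite)
  also have "\<dots> \<le> E (Pi_pmf I 0 (\<lambda>_. p)) (\<lambda>y. if 2 * card I \<le> (\<Sum>i\<in>I. y i) then 1 else 0)"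
    using sum_ge_twice_of_truncated_deviation_ge[of "E p real" I \<nu> L] p I unfolding n_def \<mu>_def
    by (intro expectation_mono_finite finite_set_Pi_pmf) auto
  finally show ?thesis
    using mono by linarith
qed

lemma central_moment_2_eq:
  assumes "finite (set_pmf q)"
  shows "central_moment q f 2 = E q (\<lambda>x. (f x)\<^sup>2) - (E q f)\<^sup>2"
proof -
  have "central_moment q f 2 = E q (\<lambda>x. (f x)\<^sup>2 - 2 * E q f * f x + (E q f)\<^sup>2)"
    unfolding central_moment_def by (simp add: power2_eq_square algebra_simps)
  also have "\<dots> = E q (\<lambda>x. (f x)\<^sup>2) - (E q f)\<^sup>2"
    using assms by (simp add: integrable_measure_pmf_finite power2_eq_square)
  finally show ?thesis .
qed

lemma central_moment_4_le:
  assumes "finite (set_pmf q)" "\<And>x. 0 \<le> f x"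
  shows "central_moment q f 4 \<le> E q (\<lambda>x. f x ^ 4) + (E q f) ^ 4"
proof -
  have mean: "0 \<le> E q f"
    using assms by (intro expectation_nonneg_pmf) auto
  have "(f x - E q f) ^ 4 \<le> f x ^ 4 + (E q f) ^ 4" for x
  proof -
    have "\<bar>f x - E q f\<bar> ^ 4 \<le> (max (f x) (E q f)) ^ 4"
      using assms(2)[of x] mean by (intro power_mono) auto
    also have "\<dots> \<le> f x ^ 4 + (E q f) ^ 4"
      using assms mean by (auto simp: max_def)
    finally show ?thesis by (simp add: power_even_abs_numeral)
  qed
  then have "central_moment q f 4 \<le> E q (\<lambda>x. f x ^ 4 + (E q f) ^ 4)"
    unfolding central_moment_def using assms by (intro expectation_mono_finite)
  also have "\<dots> = E q (\<lambda>x. f x ^ 4) + (E q f) ^ 4"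
    using assms by (simp add: integrable_measure_pmf_finite)
  finally show ?thesis .
qed

context powerlaw_pmf
begin

lemma truncated_variance_ge:
  assumes "3 \<le> z" "3 \<le> L"
  shows "min (g0 * (2 powr (-a) - 3 powr (-a))) (g0 * (3 powr (-a) - 4 powr (-a))) / 2
    \<le> central_moment p (truncate L) 2"
proof -
  define \<nu> where "\<nu> = E p (truncate L)"
  define p2 where "p2 = g0 * (2 powr (-a) - 3 powr (-a))"
  define p3 where "p3 = g0 * (3 powr (-a) - 4 powr (-a))"
  have p23: "p2 \<le> pmf p 2" "p3 \<le> pmf p 3"
    unfolding p2_def p3_def using pmf_lower[of 2] pmf_lower[of 3] assms by simp_all
  have "0 < p2" "0 < p3"
    unfolding p2_def p3_def using g0_pos a_pos by (auto intro!: mult_pos_pos powr_less_mono2_neg)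
  have truncate_23: "truncate L 2 = 2" "truncate L 3 = 3"
    unfolding truncate_def using assms by auto
  have "1 / 2 \<le> (2 - \<nu>)\<^sup>2 + (3 - \<nu>)\<^sup>2"
    using zero_le_power2[of "2 * \<nu> - 5"] by (simp add: power2_eq_square algebra_simps)
  then have "min p2 p3 * (1 / 2) \<le> min p2 p3 * ((2 - \<nu>)\<^sup>2 + (3 - \<nu>)\<^sup>2)"
    using \<open>0 < p2\<close> \<open>0 < p3\<close> by (intro mult_left_mono) auto
  also have "\<dots> = min p2 p3 * (2 - \<nu>)\<^sup>2 + min p2 p3 * (3 - \<nu>)\<^sup>2"
    by (simp only: distrib_left)
  also have "\<dots> \<le> p2 * (2 - \<nu>)\<^sup>2 + p3 * (3 - \<nu>)\<^sup>2"
    by (intro add_mono mult_right_mono) auto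
  also have "\<dots> \<le> pmf p 2 * (2 - \<nu>)\<^sup>2 + pmf p 3 * (3 - \<nu>)\<^sup>2"
    using p23 by (intro add_mono mult_right_mono) auto
  also have "\<dots> = (\<Sum>k\<in>{2, 3}. pmf p k * (truncate L k - \<nu>)\<^sup>2)"
    using truncate_23 by simp
  also have "\<dots> \<le> (\<Sum>k\<le>z. pmf p k * (truncate L k - \<nu>)\<^sup>2)"
    using assms by (intro sum_mono2) auto
  also have "\<dots> = central_moment p (truncate L) 2"
    unfolding central_moment_def expectation_eq_sum \<nu>_def ..
  finally show ?thesis
    unfolding p2_def p3_def by simp
qed

lemma truncated_fourth_moment_le:
  assumes "0 < L" "0 \<le> s" "s \<le> 4"
  shows "E p (\<lambda>k. truncate L k ^ 4) \<le> L powr (4 - s) * E p (\<lambda>k. real k powr s)"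
proof -
  have "truncate L k ^ 4 \<le> L powr (4 - s) * real k powr s" for k
  proof -
    define y where "y = truncate L k"
    have y: "0 \<le> y" "y \<le> L" "y \<le> real k"
      unfolding y_def truncate_def using assms by auto
    show ?thesis
    proof (cases "y = 0")
      case True
      then show ?thesis unfolding y_def using assms by simp
    next
      case False
      have "y powr (4 - s) * y powr s = y powr 4"
        by (simp only: powr_add[symmetric]) simp
      then have "truncate L k ^ 4 = y powr (4 - s) * y powr s"
        using y False unfolding y_def[symmetric] by (simp add: powr_numeral)
      also have "\<dots> \<le> L powr (4 - s) * real k powr s"
        using y assms by (intro mult_mono powr_mono2) auto
      finally show ?thesis .
    qed
  qed
  then have "E p (\<lambda>k. truncate L k ^ 4) \<le> E p (\<lambda>k. L powr (4 - s) * real k powr s)"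
    by (intro expectation_mono_finite finite_support)
  then show ?thesis by simp
qed

lemma truncation_loss_le:
  assumes "0 < L" "1 \<le> s"
  shows "E p (\<lambda>k. real k - truncate L k) \<le> L powr (1 - s) * E p (\<lambda>k. real k powr s)"
proof -
  have "real k - truncate L k \<le> L powr (1 - s) * real k powr s" for k
  proof (cases "real k \<le> L")
    case True
    then show ?thesis unfolding truncate_def by simp
  next
    case False
    then have k: "0 < real k" "L < real k"
      using assms by auto
    have "real k - truncate L k \<le> real k"
      unfolding truncate_def using assms by auto
    also have "real k = real k powr (1 - s) * real k powr s"
      using k by (simp add: powr_add[symmetric])
    also have "\<dots> \<le> L powr (1 - s) * real k powr s"
      using k assms by (intro mult_right_mono powr_mono2') auto
    finally show ?thesis .
  qed
  then have "E p (\<lambda>k. real k - truncate L k) \<le> E p (\<lambda>k. L powr (1 - s) * real k powr s)"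
    by (intro expectation_mono_finite finite_support)
  then show ?thesis by simp
qed

lemma pmf_times_truncate_fourth_le_a2:
  assumes "a = 2" "1 \<le> L" and m: "real m \<le> L"
  shows "pmf p k * truncate L k ^ 4
    \<le> (if k \<le> m then 1 + 2 * B * L else 0) + (if m < k then pmf p k * L ^ 4 else 0)"
proof (cases "k \<le> m")
  case True
  then have truncate_k: "truncate L k = real k"
    unfolding truncate_def using m by auto
  have "pmf p k * real k ^ 4 \<le> 1 + 2 * B * L"
  proof (cases "k < 2")
    case True
    then have "real k ^ 4 \<le> 1" by (cases k) (auto simp: less_Suc_eq)
    then have "pmf p k * real k ^ 4 \<le> 1 * 1" by (intro mult_mono) (auto simp: pmf_le_1)
    moreover have "0 \<le> 2 * B * L" using B_pos assms by simp
    ultimately show ?thesis by simp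
  next
    case False
    have "pmf p k * real k ^ 4 \<le> (B * 2 / real k ^ 3) * real k ^ 4"
      using pmf_le_inverse_power[of 2 k] assms False by (intro mult_right_mono) auto
    also have "\<dots> = 2 * B * real k"
      using False by (simp add: power_eq_if)
    also have "\<dots> \<le> 2 * B * L"
      using m True B_pos by (intro mult_left_mono) auto
    finally show ?thesis by simp
  qed
  then show ?thesis using truncate_k True by simp
next
  case False
  have "truncate L k ^ 4 \<le> L ^ 4"
    unfolding truncate_def using assms by (intro power_mono) auto
  then have "pmf p k * truncate L k ^ 4 \<le> pmf p k * L ^ 4"
    by (intro mult_left_mono) auto
  then show ?thesis using False by simp
qed

lemma truncated_fourth_moment_le_a2:
  assumes "a = 2" "1 \<le> L"
  shows "E p (\<lambda>k. truncate L k ^ 4) \<le> (2 + 5 * B) * L\<^sup>2"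
proof -
  define m where "m = nat \<lfloor>L\<rfloor>"
  have m: "real m \<le> L" "L < real m + 1" "1 \<le> m"
    unfolding m_def using assms by linarith+
  have pointwise: "pmf p k * truncate L k ^ 4
      \<le> (if k \<le> m then 1 + 2 * B * L else 0) + (if m < k then pmf p k * L ^ 4 else 0)" for k
    using pmf_times_truncate_fourth_le_a2[OF assms m(1)] .
  have "E p (\<lambda>k. truncate L k ^ 4)
      \<le> (\<Sum>k\<le>z. if k \<le> m then 1 + 2 * B * L else 0) + (\<Sum>k\<le>z. if m < k then pmf p k * L ^ 4 else 0)"
    unfolding expectation_eq_sum sum.distrib[symmetric] by (intro sum_mono pointwise)
  also have "(\<Sum>k\<le>z. if k \<le> m then 1 + 2 * B * L else 0) = (\<Sum>k\<in>{..z} \<inter> {..m}. 1 + 2 * B * L)"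
    by (subst sum.inter_restrict) auto
  also have "\<dots> \<le> (\<Sum>k\<le>m. 1 + 2 * B * L)"
    using B_pos assms by (intro sum_mono2) auto
  also have "\<dots> = (real m + 1) * (1 + 2 * B * L)"
    by simp
  also have "\<dots> \<le> (2 * L) * (1 + 2 * B * L)"
    using m assms B_pos by (intro mult_right_mono) auto
  also have "(\<Sum>k\<le>z. if m < k then pmf p k * L ^ 4 else 0) = (\<Sum>k\<in>{Suc m..z}. pmf p k) * L ^ 4"
    by (subst sum_distrib_right, rule sum.mono_neutral_cong_right) auto
  also have "\<dots> \<le> B * real (Suc m) powr (-a) * L ^ 4"
    using m by (intro mult_right_mono tail_sum_le) auto
  also have "B * real (Suc m) powr (-a) \<le> B / L\<^sup>2"
  proof -
    have "real (Suc m) powr (-a) = 1 / (real m + 1)\<^sup>2"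
      using assms by (simp add: powr_minus_divide powr_realpow add.commute)
    also have "\<dots> \<le> 1 / L\<^sup>2"
      using m assms by (intro divide_left_mono power_mono) auto
    finally show ?thesis
      using B_pos by (simp add: divide_inverse mult_left_mono)
  qed
  also have "2 * L * (1 + 2 * B * L) + B / L\<^sup>2 * L ^ 4 \<le> (2 + 5 * B) * L\<^sup>2"
  proof -
    have "B / L\<^sup>2 * L ^ 4 = B * L\<^sup>2"
      using assms by (simp add: power2_eq_square power4_eq_xxxx)
    moreover have "2 * L \<le> 2 * L\<^sup>2"
      using assms by (simp add: power2_eq_square)
    ultimately show ?thesis
      by (simp add: algebra_simps power2_eq_square)
  qed
  finally show ?thesis
    by (simp add: mult_right_mono)
qed

lemma pmf_times_truncation_loss_le_a2:
  assumes "a = 2" and m: "real m \<le> L" "1 \<le> m"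
  shows "pmf p k * (real k - truncate L k)
    \<le> (if m < k then 4 * B * (1 / real k - 1 / real (Suc k)) else 0)"
proof (cases "m < k")
  case True
  then have k: "2 \<le> k"
    using m by auto
  have "pmf p k * (real k - truncate L k) \<le> (B * 2 / real k ^ 3) * real k"
    using pmf_le_inverse_power[of 2 k] assms k B_pos
    by (intro mult_mono) (auto simp: truncate_def)
  also have "\<dots> = 2 * B / (real k)\<^sup>2"
    using k by (simp add: power2_eq_square power3_eq_cube)
  also have "\<dots> \<le> 4 * B * (1 / real k - 1 / real (Suc k))"
  proof -
    have "1 / (real k)\<^sup>2 \<le> 2 / (real k * (real k + 1))"
      using k by (simp add: divide_simps power2_eq_square)
    also have "\<dots> = 2 * (1 / real k - 1 / real (Suc k))"
      using k by (simp add: field_simps)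
    finally show ?thesis
      using B_pos by (simp add: mult_left_mono divide_inverse)
  qed
  finally show ?thesis using True by simp
next
  case False
  then have "truncate L k = real k"
    unfolding truncate_def using m by auto
  then show ?thesis using False by simp
qed

lemma truncation_loss_le_a2:
  assumes "a = 2" "1 \<le> L"
  shows "E p (\<lambda>k. real k - truncate L k) \<le> 4 * B / L"
proof -
  define m where "m = nat \<lfloor>L\<rfloor>"
  have m: "real m \<le> L" "L < real m + 1" "1 \<le> m"
    unfolding m_def using assms by linarith+
  have pointwise: "pmf p k * (real k - truncate L k)
      \<le> (if m < k then 4 * B * (1 / real k - 1 / real (Suc k)) else 0)" for k
    using pmf_times_truncation_loss_le_a2[OF assms(1) m(1,3)] .
  have "E p (\<lambda>k. real k - truncate L k) \<le> (\<Sum>k\<le>z. if m < k then 4 * B * (1 / real k - 1 / real (Suc k)) else 0)"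
    unfolding expectation_eq_sum by (intro sum_mono pointwise)
  also have "\<dots> = 4 * B * (\<Sum>k\<in>{Suc m..z}. 1 / real k - 1 / real (Suc k))"
    unfolding sum_distrib_left by (rule sum.mono_neutral_cong_right) auto
  also have "(\<Sum>k\<in>{Suc m..z}. 1 / real k - 1 / real (Suc k)) \<le> 1 / L"
  proof (cases "Suc m \<le> z")
    case True
    have "(\<Sum>k\<in>{Suc m..z}. 1 / real k - 1 / real (Suc k)) = 1 / real (Suc m) - 1 / real (Suc z)"
      using sum_Suc_diff[of "Suc m" z "\<lambda>k. - (1 / real k)"] True by simp
    also have "\<dots> \<le> 1 / real (Suc m)"
      by simp
    also have "\<dots> \<le> 1 / L"
      using m assms by (intro divide_left_mono) auto
    finally show ?thesis .
  next
    case False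
    then show ?thesis using assms by simp
  qed
  finally show ?thesis
    using B_pos by (simp add: mult_left_mono)
qed

lemma truncated_second_moment_ge_a2:
  assumes "a = 2" "1 \<le> L"
  shows "g0 * ln ((real (min (nat \<lfloor>L\<rfloor>) z) + 2) / 3) \<le> E p (\<lambda>k. (truncate L k)\<^sup>2)"
proof -
  define K where "K = min (nat \<lfloor>L\<rfloor>) z"
  have floor_L: "real (nat \<lfloor>L\<rfloor>) \<le> L"
    using assms by linarith
  have "g0 * (1 / (real k + 1)) \<le> pmf p k * (truncate L k)\<^sup>2" if k: "k \<in> {2..K}" for k
  proof -
    have truncate_k: "truncate L k = real k"
      unfolding truncate_def using k floor_L by (auto simp: K_def)
    have "g0 * (real k powr (-a) - real (k + 1) powr (-a)) \<le> pmf p k"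
      using k by (intro pmf_lower) (auto simp: K_def)
    also have "real k powr (-a) - real (k + 1) powr (-a) = 1 / (real k)\<^sup>2 - 1 / (real k + 1)\<^sup>2"
      using assms k by (simp add: powr_minus_divide powr_realpow add.commute)
    finally have "g0 * (1 / (real k)\<^sup>2 - 1 / (real k + 1)\<^sup>2) * (real k)\<^sup>2 \<le> pmf p k * (real k)\<^sup>2"
      by (intro mult_right_mono) auto
    moreover have "(1 / (real k)\<^sup>2 - 1 / (real k + 1)\<^sup>2) * (real k)\<^sup>2 = 1 - (real k / (real k + 1))\<^sup>2"
      using k by (simp add: field_simps power2_eq_square)
    moreover have "1 / (real k + 1) \<le> 1 - (real k / (real k + 1))\<^sup>2"
    proof -
      have "(real k / (real k + 1)) * (real k / (real k + 1)) \<le> 1 * (real k / (real k + 1))"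
        by (intro mult_right_mono) (auto simp: divide_le_eq)
      moreover have "1 - real k / (real k + 1) = 1 / (real k + 1)"
        by (simp add: field_simps)
      ultimately show ?thesis by (simp add: power2_eq_square)
    qed
    ultimately show ?thesis
      using g0_pos truncate_k by (smt (verit) mult.assoc mult_left_mono)
  qed
  then have "g0 * (\<Sum>k\<in>{2..K}. 1 / (real k + 1)) \<le> (\<Sum>k\<in>{2..K}. pmf p k * (truncate L k)\<^sup>2)"
    unfolding sum_distrib_left by (rule sum_mono)
  also have "\<dots> \<le> (\<Sum>k\<le>z. pmf p k * (truncate L k)\<^sup>2)"
    unfolding K_def by (intro sum_mono2) auto
  finally show ?thesis
    using ln_le_harmonic_tail[of K] g0_pos unfolding K_def expectation_eq_sum
    by (smt (verit) mult_left_mono)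
qed

lemma truncation_loss_eq:
  "E p real - E p (truncate L) = E p (\<lambda>k. real k - truncate L k)"
  using finite_support by (simp add: integrable_measure_pmf_finite)

lemma truncation_loss_nonneg:
  "0 \<le> E p real - E p (truncate L)"
  unfolding truncation_loss_eq by (intro expectation_nonneg_pmf) (simp add: truncate_le)

lemma truncated_fourth_moment_le_linear:
  assumes "0 \<le> s" "s < 4" "0 < N" "E p (\<lambda>k. real k powr s) \<le> M"
  shows "E p (\<lambda>k. truncate (real N powr (1 / (4 - s))) k ^ 4) \<le> M * real N"
proof -
  have "E p (\<lambda>k. truncate (real N powr (1 / (4 - s))) k ^ 4)
      \<le> (real N powr (1 / (4 - s))) powr (4 - s) * E p (\<lambda>k. real k powr s)"
    using assms by (intro truncated_fourth_moment_le) auto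
  also have "(real N powr (1 / (4 - s))) powr (4 - s) = real N"
    using assms by (simp add: powr_powr)
  also have "real N * E p (\<lambda>k. real k powr s) \<le> real N * M"
    using assms by (intro mult_left_mono) auto
  finally show ?thesis
    by (simp add: mult.commute)
qed

lemma truncation_loss_sq_le_powr:
  assumes "1 \<le> s" "s < 4" "0 < N" "E p (\<lambda>k. real k powr s) \<le> M"
  shows "real (N - 1) * (E p real - E p (truncate (real N powr (1 / (4 - s)))))\<^sup>2
    \<le> real N powr ((6 - 3 * s) / (4 - s)) * M\<^sup>2"
proof -
  define L where "L = real N powr (1 / (4 - s))"
  have "E p real - E p (truncate L) \<le> L powr (1 - s) * E p (\<lambda>k. real k powr s)"
    using truncation_loss_le[of L s] assms unfolding truncation_loss_eq[symmetric] L_def by simp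
  also have "\<dots> \<le> L powr (1 - s) * M"
    using assms by (intro mult_left_mono) auto
  finally have "E p real - E p (truncate L) \<le> L powr (1 - s) * M" .
  then have "(E p real - E p (truncate L))\<^sup>2 \<le> (L powr (1 - s) * M)\<^sup>2"
    using truncation_loss_nonneg by (intro power_mono) auto
  then have "real (N - 1) * (E p real - E p (truncate L))\<^sup>2 \<le> real N * (L powr (1 - s) * M)\<^sup>2"
    by (intro mult_mono) auto
  also have "real N * (L powr (1 - s) * M)\<^sup>2 = real N powr (1 + 2 * (1 - s) / (4 - s)) * M\<^sup>2"
    unfolding L_def using assms by (simp add: powr_powr powr_power power_mult_distrib powr_mult_base)
  also have "1 + 2 * (1 - s) / (4 - s) = (6 - 3 * s) / (4 - s)"
    using assms by (simp add: field_simps)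
  finally show ?thesis
    unfolding L_def .
qed

lemma truncated_variance_ge_a2:
  assumes "a = 2" "1 \<le> L"
  shows "g0 * ln ((real (min (nat \<lfloor>L\<rfloor>) z) + 2) / 3) - (E p real)\<^sup>2 \<le> central_moment p (truncate L) 2"
proof -
  have "E p (truncate L) \<le> E p real"
    by (intro expectation_mono_finite finite_support) (simp add: truncate_le)
  then have "(E p (truncate L))\<^sup>2 \<le> (E p real)\<^sup>2"
    using assms by (intro power_mono) (auto intro!: expectation_nonneg_pmf truncate_nonneg)
  then show ?thesis
    using truncated_second_moment_ge_a2[OF assms] by (simp add: central_moment_2_eq[OF finite_support])
qed

lemma truncation_loss_sq_le_a2:
  assumes "a = 2" "1 \<le> N"
  shows "real (N - 1) * (E p real - E p (truncate (sqrt (real N))))\<^sup>2 \<le> 16 * B\<^sup>2"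
proof -
  have "(E p real - E p (truncate (sqrt (real N))))\<^sup>2 \<le> (4 * B / sqrt (real N))\<^sup>2"
    using truncation_loss_le_a2[OF assms(1), of "sqrt (real N)"] truncation_loss_nonneg assms
    unfolding truncation_loss_eq[symmetric] by (intro power_mono) auto
  also have "\<dots> = 16 * B\<^sup>2 / real N"
    by (simp add: power_divide power_mult_distrib)
  finally have "real (N - 1) * (E p real - E p (truncate (sqrt (real N))))\<^sup>2 \<le> real N * (16 * B\<^sup>2 / real N)"
    by (intro mult_mono) auto
  then show ?thesis
    using assms by simp
qed

end

lemma loss_condition_of_large_threshold:
  fixes C4 B T :: real
  assumes "1 \<le> T" "256 * B\<^sup>2 * (C4 + 3) \<le> T" "0 \<le> C4"
  shows "16 * (C4 / T ^ 3 + 3 / T) * (16 * B\<^sup>2) \<le> 1"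
proof -
  have "C4 / T ^ 3 \<le> C4 / T"
    using assms by (intro divide_left_mono) (auto simp: power_increasing[of 1 3 T, simplified])
  then have "16 * (C4 / T ^ 3 + 3 / T) * (16 * B\<^sup>2) \<le> 16 * (C4 / T + 3 / T) * (16 * B\<^sup>2)"
    by (intro mult_right_mono mult_left_mono add_right_mono) auto
  also have "\<dots> = 256 * B\<^sup>2 * (C4 + 3) / T"
    using assms by (simp add: field_simps)
  also have "\<dots> \<le> 1"
    using assms by simp
  finally show ?thesis .
qed

lemma eventually_real_powr_ge:
  assumes "0 \<le> c" "0 < r"
  shows "\<forall>\<^sub>F N in sequentially. c \<le> real N powr r"
  using filterlim_real_sequentially[unfolded filterlim_at_top, rule_format, of "c powr (1 / r)"]
proof eventually_elim
  case (elim N)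
  have "c = (c powr (1 / r)) powr r"
    using assms by (simp add: powr_powr)
  also have "\<dots> \<le> real N powr r"
    using elim assms by (intro powr_mono2) auto
  finally show ?case .
qed

locale light_family =
  fixes \<kappa> :: real and p :: "nat \<Rightarrow> nat pmf" and z :: "nat \<Rightarrow> nat" and B g0 d :: real
  assumes kappa: "2 \<le> \<kappa>"
    and powerlaw: "\<And>N. powerlaw_pmf (p N) \<kappa> (z N) B g0"
    and mean_gt_2: "\<forall>\<^sub>F N in sequentially. 2 < E (p N) real"
    and d_pos: "0 < d"
    and z_linear: "\<forall>\<^sub>F N in sequentially. d * real N \<le> real (z N)"
begin

definition mean_bound :: real where
  "mean_bound = 2 + B * \<kappa> * zeta_sum \<kappa>"

lemma mean_le_mean_bound: "E (p N) real \<le> mean_bound"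
  unfolding mean_bound_def using powerlaw_pmf.mean_le[OF powerlaw] kappa by simp

lemma mean_nonneg: "0 \<le> E (p N) real"
  by (intro expectation_nonneg_pmf) simp

lemma mean_bound_nonneg: "0 \<le> mean_bound"
  using mean_le_mean_bound[of 0] mean_nonneg[of 0] by linarith

lemma eventually_z_ge: "\<forall>\<^sub>F N in sequentially. c \<le> real (z N)"
  using z_linear filterlim_real_sequentially[unfolded filterlim_at_top, rule_format, of "c / d"]
proof eventually_elim
  case (elim N)
  then show ?case
    using d_pos by (simp add: divide_le_eq mult.commute)
qed

definition good_truncation :: "(nat \<Rightarrow> real) \<Rightarrow> real \<Rightarrow> real \<Rightarrow> bool" where
  "good_truncation L s0 C4 \<longleftrightarrow> 0 < s0 \<and> 0 \<le> C4 \<and>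
    (\<forall>\<^sub>F N in sequentially. s0 \<le> central_moment (p N) (truncate (L N)) 2 \<and>
      central_moment (p N) (truncate (L N)) 4 \<le> C4 * real (N - 1) \<and>
      16 * (C4 / s0 ^ 3 + 3 / s0) * (real (N - 1) * (E (p N) real - E (p N) (truncate (L N)))\<^sup>2) \<le> 1)"

lemma sum_ge_twice_prob_ge_of_good_truncation:
  assumes "good_truncation L s0 C4"
  shows "\<exists>c>0. \<forall>\<^sub>F N in sequentially.
    c \<le> E (Pi_pmf {1..<N} 0 (\<lambda>_. p N)) (\<lambda>y. if 2 * (N - 1) \<le> (\<Sum>i\<in>{1..<N}. y i) then 1 else 0)"
proof -
  from assms have constants: "0 < s0" "0 \<le> C4"
    and conditions: "\<forall>\<^sub>F N in sequentially. s0 \<le> central_moment (p N) (truncate (L N)) 2 \<and>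
      central_moment (p N) (truncate (L N)) 4 \<le> C4 * real (N - 1) \<and>
      16 * (C4 / s0 ^ 3 + 3 / s0) * (real (N - 1) * (E (p N) real - E (p N) (truncate (L N)))\<^sup>2) \<le> 1"
    unfolding good_truncation_def by auto
  have "\<forall>\<^sub>F N in sequentially.
      s0\<^sup>2 / (16 * (C4 + 3 * s0\<^sup>2)) \<le> E (Pi_pmf {1..<N} 0 (\<lambda>_. p N)) (\<lambda>y. if 2 * (N - 1) \<le> (\<Sum>i\<in>{1..<N}. y i) then 1 else 0)"
    using conditions mean_gt_2 eventually_ge_at_top[of "2::nat"]
  proof eventually_elim
    case (elim N)
    then show ?case
      using iid_sum_ge_twice_prob_ge[of "p N" "{1..<N}" s0 C4 "L N"] constants
        powerlaw_pmf.finite_support[OF powerlaw] by simp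
  qed
  moreover have "0 < s0\<^sup>2 / (16 * (C4 + 3 * s0\<^sup>2))"
    using constants by (auto intro!: divide_pos_pos add_nonneg_pos)
  ultimately show ?thesis by blast
qed

lemma central_fourth_moment_le_linear:
  assumes "0 \<le> L" "2 \<le> N" "0 \<le> K" "E (p N) (\<lambda>k. truncate L k ^ 4) \<le> K * real N"
  shows "central_moment (p N) (truncate L) 4 \<le> (2 * K + mean_bound ^ 4) * real (N - 1)"
proof -
  have "(E (p N) (truncate L)) ^ 4 \<le> mean_bound ^ 4"
    using mean_le_mean_bound[of N] assms(1) truncate_nonneg powerlaw_pmf.finite_support[OF powerlaw]
    by (intro power_mono order_trans[OF expectation_mono_finite[OF _ truncate_le]] expectation_nonneg_pmf)
      auto
  then have "central_moment (p N) (truncate L) 4 \<le> K * real N + mean_bound ^ 4"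
    using central_moment_4_le[OF powerlaw_pmf.finite_support[OF powerlaw], of "truncate L" N]
      truncate_nonneg[OF assms(1)] assms(4) by fastforce
  also have "\<dots> \<le> (2 * K) * real (N - 1) + mean_bound ^ 4 * real (N - 1)"
  proof (intro add_mono)
    show "K * real N \<le> 2 * K * real (N - 1)"
      using assms mult_left_mono[of "real N" "2 * real (N - 1)" K] by (simp add: of_nat_diff algebra_simps)
    show "mean_bound ^ 4 \<le> mean_bound ^ 4 * real (N - 1)"
      using assms mean_bound_nonneg by (simp add: mult_le_cancel_left1 of_nat_diff)
  qed
  finally show ?thesis
    by (simp add: algebra_simps)
qed

lemma good_truncation_gt2:
  assumes "2 < \<kappa>"
  obtains L s0 C4 where "good_truncation L s0 C4"
proof -
  define s where "s = 2 + min (\<kappa> - 2) 1 / 2"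
  have s: "2 < s" "s < \<kappa>" "s \<le> 3"
    unfolding s_def using assms by (auto simp: min_def field_simps)
  define M where "M = 2 + B * \<kappa> * zeta_sum (\<kappa> + 1 - s)"
  define s0 where "s0 = min (g0 * (2 powr (-\<kappa>) - 3 powr (-\<kappa>))) (g0 * (3 powr (-\<kappa>) - 4 powr (-\<kappa>))) / 2"
  define C4 where "C4 = 2 * M + mean_bound ^ 4"
  define R where "R = 16 * (C4 / s0 ^ 3 + 3 / s0)"
  define e where "e = (6 - 3 * s) / (4 - s)"
  define L where "L = (\<lambda>N::nat. real N powr (1 / (4 - s)))"
  have M: "0 \<le> M" "E (p N) (\<lambda>k. real k powr s) \<le> M" for N
    using powerlaw_pmf.powr_moment_le[OF powerlaw, of s N] powerlaw_pmf.B_pos[OF powerlaw]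
      zeta_sum_nonneg[of "\<kappa> + 1 - s"] s kappa
    unfolding M_def by auto
  have s0: "0 < s0"
    unfolding s0_def using powerlaw_pmf.g0_pos[OF powerlaw] kappa
    by (auto intro!: mult_pos_pos powr_less_mono2_neg)
  have C4: "0 \<le> C4"
    unfolding C4_def using M mean_bound_nonneg by simp
  have R: "0 \<le> R"
    unfolding R_def using s0 C4 by simp
  have "(\<lambda>N. R * M\<^sup>2 * real N powr e) \<longlonglongrightarrow> R * M\<^sup>2 * 0"
    using s unfolding e_def
    by (intro tendsto_mult tendsto_const tendsto_neg_powr filterlim_real_sequentially)
      (auto simp: divide_neg_pos)
  then have small: "\<forall>\<^sub>F N in sequentially. R * (real N powr e * M\<^sup>2) < 1"
    by (simp add: order_tendstoD(2) mult_ac)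
  have L_ge_3: "\<forall>\<^sub>F N in sequentially. 3 \<le> L N"
    unfolding L_def using s by (intro eventually_real_powr_ge) auto
  have "\<forall>\<^sub>F N in sequentially. s0 \<le> central_moment (p N) (truncate (L N)) 2 \<and>
      central_moment (p N) (truncate (L N)) 4 \<le> C4 * real (N - 1) \<and>
      R * (real (N - 1) * (E (p N) real - E (p N) (truncate (L N)))\<^sup>2) \<le> 1"
    using small L_ge_3 eventually_z_ge[of 3] eventually_ge_at_top[of "2::nat"]
  proof eventually_elim
    case (elim N)
    interpret powerlaw_pmf "p N" \<kappa> "z N" B g0
      by (rule powerlaw)
    have "central_moment (p N) (truncate (L N)) 4 \<le> C4 * real (N - 1)"
      unfolding C4_def L_def
      using central_fourth_moment_le_linear truncated_fourth_moment_le_linear[of s N M] M(1) M(2)[of N] elim s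
      by simp
    moreover have "R * (real (N - 1) * (E (p N) real - E (p N) (truncate (L N)))\<^sup>2) \<le> 1"
    proof -
      have "real (N - 1) * (E (p N) real - E (p N) (truncate (L N)))\<^sup>2 \<le> real N powr e * M\<^sup>2"
        using truncation_loss_sq_le_powr[of s N M] M(2)[of N] elim s unfolding L_def e_def by simp
      then have "R * (real (N - 1) * (E (p N) real - E (p N) (truncate (L N)))\<^sup>2) \<le> R * (real N powr e * M\<^sup>2)"
        using R by (rule mult_left_mono)
      then show ?thesis
        using elim(1) by linarith
    qed
    ultimately show ?case
      using truncated_variance_ge[of "L N"] elim unfolding s0_def by simp
  qed
  then have "good_truncation L s0 C4"
    unfolding good_truncation_def R_def using s0 C4 by simp
  then show ?thesis by (rule that)
qed

lemma good_truncation_eq2: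
  assumes "\<kappa> = 2"
  obtains L s0 C4 where "good_truncation L s0 C4"
proof -
  define C4 where "C4 = 2 * (2 + 5 * B) + mean_bound ^ 4"
  define T where "T = max 1 (256 * B\<^sup>2 * (C4 + 3))"
  define X where "X = exp ((T + mean_bound\<^sup>2) / g0)"
  define L where "L = (\<lambda>N::nat. sqrt (real N))"
  have B: "0 < B" and g0: "0 < g0"
    using powerlaw_pmf.B_pos[OF powerlaw] powerlaw_pmf.g0_pos[OF powerlaw] by blast+
  have C4: "0 \<le> C4"
    unfolding C4_def using B by simp
  have T: "1 \<le> T" "256 * B\<^sup>2 * (C4 + 3) \<le> T"
    unfolding T_def by auto
  have small: "16 * (C4 / T ^ 3 + 3 / T) * (16 * B\<^sup>2) \<le> 1"
    using T C4 by (rule loss_condition_of_large_threshold)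
  have "\<forall>\<^sub>F N in sequentially. T \<le> central_moment (p N) (truncate (L N)) 2 \<and>
      central_moment (p N) (truncate (L N)) 4 \<le> C4 * real (N - 1) \<and>
      16 * (C4 / T ^ 3 + 3 / T) * (real (N - 1) * (E (p N) real - E (p N) (truncate (L N)))\<^sup>2) \<le> 1"
    using filterlim_real_sequentially[unfolded filterlim_at_top, rule_format, of "(3 * X + 1)\<^sup>2"]
      eventually_z_ge[of "3 * X"] eventually_ge_at_top[of "2::nat"]
  proof eventually_elim
    case (elim N)
    interpret powerlaw_pmf "p N" \<kappa> "z N" B g0
      by (rule powerlaw)
    have L: "1 \<le> L N" "(L N)\<^sup>2 = real N" "3 * X + 1 \<le> L N"
      unfolding L_def using elim real_sqrt_le_mono[OF elim(1)] by (auto simp: real_sqrt_ge_1_iff)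
    have "3 * X \<le> real (nat \<lfloor>L N\<rfloor>)"
      using L(3) by linarith
    then have "X \<le> (real (min (nat \<lfloor>L N\<rfloor>) (z N)) + 2) / 3"
      using elim(2) by auto
    then have "ln X \<le> ln ((real (min (nat \<lfloor>L N\<rfloor>) (z N)) + 2) / 3)"
      unfolding X_def by (intro ln_mono) auto
    then have "T + mean_bound\<^sup>2 \<le> g0 * ln ((real (min (nat \<lfloor>L N\<rfloor>) (z N)) + 2) / 3)"
      unfolding X_def using g0 by (simp add: field_simps)
    moreover have "(E (p N) real)\<^sup>2 \<le> mean_bound\<^sup>2"
      using mean_le_mean_bound[of N] mean_nonneg[of N] by (intro power_mono) auto
    ultimately have "T \<le> central_moment (p N) (truncate (L N)) 2"
      using truncated_variance_ge_a2[OF assms L(1)] by linarith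
    moreover have "central_moment (p N) (truncate (L N)) 4 \<le> C4 * real (N - 1)"
      using truncated_fourth_moment_le_a2[OF assms L(1)] central_fourth_moment_le_linear[of "L N" N "2 + 5 * B"]
        L elim B unfolding C4_def by simp
    moreover have "16 * (C4 / T ^ 3 + 3 / T) * (real (N - 1) * (E (p N) real - E (p N) (truncate (L N)))\<^sup>2)
        \<le> 16 * (C4 / T ^ 3 + 3 / T) * (16 * B\<^sup>2)"
      using truncation_loss_sq_le_a2[OF assms, of N] elim T C4 unfolding L_def by (intro mult_left_mono) auto
    ultimately show ?case
      using small by linarith
  qed
  then have "good_truncation L T C4"
    unfolding good_truncation_def using T C4 by simp
  then show ?thesis by (rule that)
qed

lemma sum_ge_twice_prob_ge:
  obtains c where "0 < c" "\<forall>\<^sub>F N in sequentially.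
    c \<le> E (Pi_pmf {1..<N} 0 (\<lambda>_. p N)) (\<lambda>y. if 2 * (N - 1) \<le> (\<Sum>i\<in>{1..<N}. y i) then 1 else 0)"
proof -
  obtain L s0 C4 where "good_truncation L s0 C4"
  proof (cases "\<kappa> = 2")
    case True
    then show ?thesis using good_truncation_eq2 that by blast
  next
    case False
    then show ?thesis using good_truncation_gt2 that kappa by force
  qed
  then show ?thesis
    using sum_ge_twice_prob_ge_of_good_truncation that by blast
qed

lemma sum_gt_linear_prob_le:
  assumes "1 \<le> N" "0 < K"
  shows "E (Pi_pmf {1..<N} 0 (\<lambda>_. p N)) (\<lambda>y. if K * real N < real (2 + (\<Sum>i\<in>{1..<N}. y i)) then 1 else 0)
    \<le> (2 + mean_bound) / K"
proof -
  let ?P = "Pi_pmf {1..<N} 0 (\<lambda>_. p N)"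
  have finite_P: "finite (set_pmf ?P)"
    using powerlaw_pmf.finite_support[OF powerlaw] by (intro finite_set_Pi_pmf) auto
  have "E ?P (\<lambda>y. if K * real N < real (2 + (\<Sum>i\<in>{1..<N}. y i)) then 1 else 0)
      \<le> E ?P (\<lambda>y. real (2 + (\<Sum>i\<in>{1..<N}. y i))) / (K * real N)"
    by (rule markov_inequality_pmf[OF finite_P]) (use assms in \<open>auto simp del: of_nat_add of_nat_sum\<close>)
  also have "E ?P (\<lambda>y. real (2 + (\<Sum>i\<in>{1..<N}. y i))) = 2 + real (N - 1) * E (p N) real"
    using finite_P expectation_sum_Pi_pmf[of "{1..<N}" "p N"] powerlaw_pmf.finite_support[OF powerlaw]
    by (simp add: integrable_measure_pmf_finite del: of_nat_sum)
  also have "\<dots> \<le> real N * (2 + mean_bound)"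
  proof -
    have "real (N - 1) * E (p N) real \<le> real N * mean_bound"
      using mean_le_mean_bound[of N] mean_nonneg[of N] mean_bound_nonneg by (intro mult_mono) auto
    then show ?thesis
      using assms by (simp add: distrib_left)
  qed
  also have "real N * (2 + mean_bound) / (K * real N) = (2 + mean_bound) / K"
    using assms by simp
  finally show ?thesis
    using assms by (simp add: divide_right_mono)
qed

lemma nu1_fact2_expectation_ge:
  obtains c where "0 < c" "\<forall>\<^sub>F N in sequentially. c \<le> E (Pi_pmf {..<N} 0 (\<lambda>_. p N)) (nu1_fact2 N)"
proof -
  obtain c where c: "0 < c" and twice: "\<forall>\<^sub>F N in sequentially.
      c \<le> E (Pi_pmf {1..<N} 0 (\<lambda>_. p N)) (\<lambda>y. if 2 * (N - 1) \<le> (\<Sum>i\<in>{1..<N}. y i) then 1 else 0)"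
    using sum_ge_twice_prob_ge by blast
  define K where "K = 2 * (2 + mean_bound) / c"
  define p2 where "p2 = g0 * (2 powr (-\<kappa>) - 3 powr (-\<kappa>))"
  have "0 < 2 + mean_bound"
    using mean_bound_nonneg by simp
  then have K: "0 < K" "(2 + mean_bound) / K = c / 2"
    unfolding K_def using c by (auto simp: field_simps)
  have p2: "0 < p2"
    unfolding p2_def using powerlaw_pmf.g0_pos[OF powerlaw] kappa
    by (auto intro!: mult_pos_pos powr_less_mono2_neg)
  have "\<forall>\<^sub>F N in sequentially. p2 * (4 / K\<^sup>2) * (c / 2) \<le> E (Pi_pmf {..<N} 0 (\<lambda>_. p N)) (nu1_fact2 N)"
    using twice eventually_z_ge[of 2] eventually_ge_at_top[of "2::nat"]
  proof eventually_elim
    case (elim N)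
    let ?P = "Pi_pmf {1..<N} 0 (\<lambda>_. p N)"
    let ?W = "\<lambda>y. \<Sum>i\<in>{1..<N}. y i"
    have finite_P: "finite (set_pmf ?P)"
      using powerlaw_pmf.finite_support[OF powerlaw] by (intro finite_set_Pi_pmf) auto
    have "E ?P (\<lambda>y. if 2 * (N - 1) \<le> ?W y then 1 else 0) - E ?P (\<lambda>y. if K * real N < real (2 + ?W y) then 1 else 0)
        = E ?P (\<lambda>y. (if 2 * (N - 1) \<le> ?W y then 1 else 0) - (if K * real N < real (2 + ?W y) then 1 else 0))"
      using finite_P by (simp add: integrable_measure_pmf_finite)
    also have "\<dots> \<le> E ?P (\<lambda>y. if 2 * (N - 1) \<le> ?W y \<and> real (2 + ?W y) \<le> K * real N then 1 else 0)"
      by (intro expectation_mono_finite finite_P) auto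
    finally have "c / 2 \<le> E ?P (\<lambda>y. if 2 * (N - 1) \<le> ?W y \<and> real (2 + ?W y) \<le> K * real N then 1 else 0)"
      using elim sum_gt_linear_prob_le[of N K] K by simp
    moreover have "p2 \<le> pmf (p N) 2"
      unfolding p2_def using powerlaw_pmf.pmf_lower[OF powerlaw, of 2 N] elim by simp
    ultimately have "p2 * (4 / K\<^sup>2) * (c / 2)
        \<le> pmf (p N) 2 * (4 / K\<^sup>2) * E ?P (\<lambda>y. if 2 * (N - 1) \<le> ?W y \<and> real (2 + ?W y) \<le> K * real N then 1 else 0)"
      using p2 K c by (intro mult_mono) auto
    also have "\<dots> \<le> E (Pi_pmf {..<N} 0 (\<lambda>_. p N)) (nu1_fact2 N)"
      using expectation_nu1_fact2_ge[OF _ powerlaw_pmf.finite_support[OF powerlaw] K(1), of N] elim by simp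
    finally show ?case .
  qed
  moreover have "0 < p2 * (4 / K\<^sup>2) * (c / 2)"
    using p2 K c by simp
  ultimately show ?thesis
    using that by blast
qed

end

section \<open>Asymptotics\<close>

lemma liminf_ratio_pos_imp_eventually_ge:
  fixes f :: "nat \<Rightarrow> nat"
  assumes "0 < liminf (\<lambda>N. ereal (real (f N) / real N))"
  obtains d where "0 < d" "\<forall>\<^sub>F N in sequentially. d * real N \<le> real (f N)"
proof -
  obtain r where r: "0 < ereal r" "ereal r < liminf (\<lambda>N. ereal (real (f N) / real N))"
    using ereal_dense2[OF assms] by blast
  have "\<forall>\<^sub>F N in sequentially. ereal r < ereal (real (f N) / real N)"
    by (rule less_LiminfD[OF r(2)])
  then have "\<forall>\<^sub>F N in sequentially. r * real N \<le> real (f N)"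
    using eventually_gt_at_top[of 0]
    by eventually_elim (simp add: field_simps)
  then show ?thesis
    using r that by auto
qed

lemma powr_neg_mult_ln_tendsto_0:
  assumes "0 < \<beta>"
  shows "(\<lambda>N. real N powr (-\<beta>) * (1 + ln (real N))) \<longlonglongrightarrow> 0"
proof -
  have "(\<lambda>N. real N powr (-\<beta>) + ln (real N) / real N powr \<beta>) \<longlonglongrightarrow> 0 + 0"
    using assms by (intro tendsto_add tendsto_neg_powr filterlim_real_sequentially lim_ln_over_power) auto
  moreover have "\<forall>\<^sub>F N in sequentially.
      real N powr (-\<beta>) + ln (real N) / real N powr \<beta> = real N powr (-\<beta>) * (1 + ln (real N))"
    using eventually_gt_at_top[of 0] by eventually_elim (simp add: powr_minus_divide field_simps)
  ultimately show ?thesis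
    by (simp add: tendsto_cong)
qed

lemma environment_weight_bounds:
  assumes "\<And>N. \<epsilon> N = c * real N powr (\<alpha> - 2) * (if \<kappa> > 2 then 1 else ln (real N))" "0 < c"
  shows "\<forall>\<^sub>F N in sequentially. 0 \<le> \<epsilon> N \<and> \<epsilon> N \<le> c * (real N powr (\<alpha> - 2) * (1 + ln (real N)))"
  using eventually_ge_at_top[of 1]
proof eventually_elim
  case (elim N)
  then have "0 \<le> (if \<kappa> > 2 then 1 else ln (real N))" "(if \<kappa> > 2 then 1 else ln (real N)) \<le> 1 + ln (real N)"
    by auto
  then show ?case
    unfolding assms(1) using assms(2) by (simp add: mult_left_mono mult.assoc)
qed

lemma merger_expectation_light_tendsto_0:
  assumes "\<And>N. powerlaw_pmf (p N) a (z N) B g0" "7 / 4 < a"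
  shows "(\<lambda>N. real N ^ 3 * E (Pi_pmf {..<N} 0 (\<lambda>_. p N)) (merger_term N)) \<longlonglongrightarrow> 0"
proof (rule Lim_null_comparison)
  define M where "M = 2 + B * a * zeta_sum (a + 1 - 7 / 4)"
  show "\<forall>\<^sub>F N in sequentially. norm (real N ^ 3 * E (Pi_pmf {..<N} 0 (\<lambda>_. p N)) (merger_term N))
      \<le> M\<^sup>2 * real N powr (-1 / 2)"
    using eventually_ge_at_top[of 2]
  proof eventually_elim
    case (elim N)
    have "E (Pi_pmf {..<N} 0 (\<lambda>_. p N)) (merger_term N) \<le> (real N powr (-7 / 4) * M)\<^sup>2"
      unfolding M_def using powerlaw_pmf.expectation_merger_term_le_powr[OF assms(1) elim, of "7 / 4"] assms(2)
      by simp
    then have "real N ^ 3 * E (Pi_pmf {..<N} 0 (\<lambda>_. p N)) (merger_term N) \<le> real N ^ 3 * (real N powr (-7 / 4) * M)\<^sup>2"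
      by (intro mult_left_mono) auto
    also have "\<dots> = M\<^sup>2 * (real N powr 3 * real N powr (-7 / 4) * real N powr (-7 / 4))"
      using elim by (simp add: power2_eq_square powr_numeral algebra_simps)
    also have "real N powr 3 * real N powr (-7 / 4) * real N powr (-7 / 4) = real N powr (3 + (-7 / 4) + (-7 / 4))"
      by (simp only: powr_add)
    also have "(3::real) + (-7 / 4) + (-7 / 4) = -1 / 2"
      by simp
    finally show ?case
      using merger_expectation_nonneg by simp
  qed
  show "(\<lambda>N. M\<^sup>2 * real N powr (-1 / 2)) \<longlonglongrightarrow> 0"
    using tendsto_mult_right_zero[OF tendsto_neg_powr[OF _ filterlim_real_sequentially], of "-1 / 2" "M\<^sup>2"]
    by simp
qed

lemma merger_expectation_heavy_powr_tendsto_0: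
  assumes "\<And>N. powerlaw_pmf (p N) a (z N) B g0" "1 < a" "a < 2"
    and "\<forall>\<^sub>F N in sequentially. 0 \<le> \<epsilon> N \<and> \<epsilon> N \<le> c * (real N powr (a - 2) * (1 + ln (real N)))"
  shows "(\<lambda>N. real N ^ 3 * (\<epsilon> N * E (Pi_pmf {..<N} 0 (\<lambda>_. p N)) (merger_term N))) \<longlonglongrightarrow> 0"
proof (rule Lim_null_comparison)
  define s where "s = (1 + 3 * a) / 4"
  define M where "M = 2 + B * a * zeta_sum (a + 1 - s)"
  show "\<forall>\<^sub>F N in sequentially. norm (real N ^ 3 * (\<epsilon> N * E (Pi_pmf {..<N} 0 (\<lambda>_. p N)) (merger_term N)))
      \<le> c * M\<^sup>2 * (real N powr (- ((a - 1) / 2)) * (1 + ln (real N)))"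
    using assms(4) eventually_ge_at_top[of 2]
  proof eventually_elim
    case (elim N)
    have "E (Pi_pmf {..<N} 0 (\<lambda>_. p N)) (merger_term N) \<le> (real N powr (-s) * M)\<^sup>2"
      unfolding M_def using powerlaw_pmf.expectation_merger_term_le_powr[OF assms(1) elim(2), of s] assms
      unfolding s_def by simp
    then have "real N ^ 3 * (\<epsilon> N * E (Pi_pmf {..<N} 0 (\<lambda>_. p N)) (merger_term N))
        \<le> real N ^ 3 * ((c * (real N powr (a - 2) * (1 + ln (real N)))) * (real N powr (-s) * M)\<^sup>2)"
      using elim merger_expectation_nonneg by (intro mult_left_mono mult_mono) auto
    also have "\<dots> = c * M\<^sup>2 * (1 + ln (real N)) * (real N powr 3 * real N powr (a - 2) * real N powr (-s) * real N powr (-s))"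
      using elim by (simp add: power2_eq_square powr_numeral algebra_simps)
    also have "real N powr 3 * real N powr (a - 2) * real N powr (-s) * real N powr (-s)
        = real N powr (3 + (a - 2) + (-s) + (-s))"
      by (simp only: powr_add)
    also have "3 + (a - 2) + (-s) + (-s) = - ((a - 1) / 2)"
      unfolding s_def by (simp add: field_simps)
    finally show ?case
      using elim merger_expectation_nonneg by (simp add: mult_ac)
  qed
  show "(\<lambda>N. c * M\<^sup>2 * (real N powr (- ((a - 1) / 2)) * (1 + ln (real N)))) \<longlonglongrightarrow> 0"
    using assms by (intro tendsto_mult_right_zero powr_neg_mult_ln_tendsto_0) auto
qed

lemma one_plus_ln_over_ln_square_tendsto_0: "(\<lambda>N. (1 + ln (real N)) / (ln (real N))\<^sup>2) \<longlonglongrightarrow> 0"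
proof -
  have "(\<lambda>N. inverse (ln (real N))) \<longlonglongrightarrow> 0"
    by (intro tendsto_inverse_0_at_top filterlim_compose[OF ln_at_top filterlim_real_sequentially])
  then have "(\<lambda>N. inverse (ln (real N)) * inverse (ln (real N)) + inverse (ln (real N))) \<longlonglongrightarrow> 0 * 0 + 0"
    by (intro tendsto_add tendsto_mult)
  moreover have "\<forall>\<^sub>F N in sequentially.
      inverse (ln (real N)) * inverse (ln (real N)) + inverse (ln (real N)) = (1 + ln (real N)) / (ln (real N))\<^sup>2"
    using eventually_gt_at_top[of 1] by eventually_elim (simp add: field_simps power2_eq_square)
  ultimately show ?thesis
    by (simp add: tendsto_cong)
qed

lemma eventually_sqrt_le_of_linear:
  fixes z :: "nat \<Rightarrow> nat"
  assumes "0 < d" "\<forall>\<^sub>F N in sequentially. d * real N \<le> real (z N)"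
  shows "\<forall>\<^sub>F N in sequentially. c * sqrt (real N) \<le> real (z N)"
  using assms(2) filterlim_real_sequentially[unfolded filterlim_at_top, rule_format, of "(max 0 (c / d))\<^sup>2"]
proof eventually_elim
  case (elim N)
  then have "sqrt ((max 0 (c / d))\<^sup>2) \<le> sqrt (real N)"
    by (intro real_sqrt_le_mono)
  then have "c \<le> d * sqrt (real N)"
    using assms(1) by (simp add: divide_le_eq mult.commute)
  then have "c * sqrt (real N) \<le> d * sqrt (real N) * sqrt (real N)"
    by (intro mult_right_mono) auto
  then show ?case
    using elim by (simp add: mult.assoc)
qed

lemma merger_expectation_heavy_log_tendsto_0:
  assumes "\<And>N. powerlaw_pmf (p N) a (z N) B g0" "a = 1"
    and "0 < d" "\<forall>\<^sub>F N in sequentially. d * real N \<le> real (z N)"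
    and "\<forall>\<^sub>F N in sequentially. 0 \<le> \<epsilon> N \<and> \<epsilon> N \<le> c * (real N powr (a - 2) * (1 + ln (real N)))"
  shows "(\<lambda>N. real N ^ 3 * (\<epsilon> N * E (Pi_pmf {..<N} 0 (\<lambda>_. p N)) (merger_term N))) \<longlonglongrightarrow> 0"
proof (rule Lim_null_comparison)
  define C where "C = (3 * B + 2)\<^sup>2"
  have g0: "0 < g0"
    using powerlaw_pmf.g0_pos[OF assms(1)] .
  have "\<forall>\<^sub>F N in sequentially. 3 * sqrt (real N) \<le> real (z N)"
    using eventually_sqrt_le_of_linear[OF assms(3,4)] .
  then show "\<forall>\<^sub>F N in sequentially. norm (real N ^ 3 * (\<epsilon> N * E (Pi_pmf {..<N} 0 (\<lambda>_. p N)) (merger_term N)))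
      \<le> c * C * ((256 / g0\<^sup>2) * ((1 + ln (real N)) / (ln (real N))\<^sup>2)
        + (1 / 4) * (real N powr (- (g0 / 16)) * (1 + ln (real N))))"
    using assms(5) eventually_ge_at_top[of 9]
  proof eventually_elim
    case (elim N)
    have N: "0 < real N" "0 < ln (real N)"
      using elim by auto
    have "E (Pi_pmf {..<N} 0 (\<lambda>_. p N)) (merger_term N)
        \<le> C * (256 / (g0\<^sup>2 * (real N)\<^sup>2 * (ln (real N))\<^sup>2) + real N powr (- (g0 / 16)) / (4 * (real N)\<^sup>2))"
      unfolding C_def using powerlaw_pmf.expectation_merger_term_le_log[OF assms(1,2)] elim by simp
    then have "real N ^ 3 * (\<epsilon> N * E (Pi_pmf {..<N} 0 (\<lambda>_. p N)) (merger_term N))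
        \<le> real N ^ 3 * ((c * (real N powr (a - 2) * (1 + ln (real N))))
          * (C * (256 / (g0\<^sup>2 * (real N)\<^sup>2 * (ln (real N))\<^sup>2) + real N powr (- (g0 / 16)) / (4 * (real N)\<^sup>2))))"
      using elim merger_expectation_nonneg by (intro mult_left_mono mult_mono) auto
    also have "real N powr (a - 2) = 1 / real N"
      using assms(2) N by (simp add: powr_minus_divide)
    also have "real N ^ 3 * ((c * (1 / real N * (1 + ln (real N))))
          * (C * (256 / (g0\<^sup>2 * (real N)\<^sup>2 * (ln (real N))\<^sup>2) + real N powr (- (g0 / 16)) / (4 * (real N)\<^sup>2))))
        = c * C * ((256 / g0\<^sup>2) * ((1 + ln (real N)) / (ln (real N))\<^sup>2)
          + (1 / 4) * (real N powr (- (g0 / 16)) * (1 + ln (real N))))"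
      using N g0 by (simp add: field_simps power2_eq_square power3_eq_cube)
    finally show ?case
      using elim merger_expectation_nonneg by simp
  qed
  show "(\<lambda>N. c * C * ((256 / g0\<^sup>2) * ((1 + ln (real N)) / (ln (real N))\<^sup>2)
      + (1 / 4) * (real N powr (- (g0 / 16)) * (1 + ln (real N))))) \<longlonglongrightarrow> 0"
  proof -
    have "(\<lambda>N. c * C * ((256 / g0\<^sup>2) * ((1 + ln (real N)) / (ln (real N))\<^sup>2)
        + (1 / 4) * (real N powr (- (g0 / 16)) * (1 + ln (real N)))))
        \<longlonglongrightarrow> c * C * ((256 / g0\<^sup>2) * 0 + (1 / 4) * 0)"
      using g0 by (intro tendsto_mult tendsto_add tendsto_const one_plus_ln_over_ln_square_tendsto_0
          powr_neg_mult_ln_tendsto_0) auto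
    then show ?thesis by simp
  qed
qed

lemma merger_expectation_heavy_tendsto_0:
  assumes "\<And>N. powerlaw_pmf (p N) a (z N) B g0" "1 \<le> a" "a < 2"
    and "0 < d" "\<forall>\<^sub>F N in sequentially. d * real N \<le> real (z N)"
    and "\<forall>\<^sub>F N in sequentially. 0 \<le> \<epsilon> N \<and> \<epsilon> N \<le> c * (real N powr (a - 2) * (1 + ln (real N)))"
  shows "(\<lambda>N. real N ^ 3 * (\<epsilon> N * E (Pi_pmf {..<N} 0 (\<lambda>_. p N)) (merger_term N))) \<longlonglongrightarrow> 0"
proof (cases "a = 1")
  case True
  then show ?thesis
    using merger_expectation_heavy_log_tendsto_0 assms by blast
next
  case False
  then show ?thesis
    using merger_expectation_heavy_powr_tendsto_0[OF assms(1) _ assms(3,6)] assms(2) by simp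
qed

lemma environment_weight_tendsto_0:
  assumes "a < 2" "\<forall>\<^sub>F N in sequentially. 0 \<le> \<epsilon> N \<and> \<epsilon> N \<le> c * (real N powr (a - 2) * (1 + ln (real N)))"
  shows "\<epsilon> \<longlonglongrightarrow> 0"
proof (rule Lim_null_comparison)
  show "\<forall>\<^sub>F N in sequentially. norm (\<epsilon> N) \<le> c * (real N powr (- (2 - a)) * (1 + ln (real N)))"
    using assms(2) by eventually_elim simp
  show "(\<lambda>N. c * (real N powr (- (2 - a)) * (1 + ln (real N)))) \<longlonglongrightarrow> 0"
    using assms(1) by (intro tendsto_mult_right_zero powr_neg_mult_ln_tendsto_0) simp
qed

text \<open>Since \<open>c\<^sub>N \<ge> const / N\<close> once the weight of the heavy-tailed environment is small, the
  ratio is \<open>O(N\<^sup>3)\<close> times the expected merger term.\<close>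

lemma coalescence_ratio_le:
  fixes pa pk :: "nat pmf"
  assumes "0 < c" "0 \<le> e" "e < 1 / 2" "1 \<le> N" "finite (set_pmf pa)" "finite (set_pmf pk)"
    and nu1: "c \<le> E (Pi_pmf {..<N} 0 (\<lambda>_. pk)) (nu1_fact2 N)"
  defines "h \<equiv> E (envA_law N e pa pk) (merger_term N)"
  shows "\<bar>real N ^ 2 / coal_cN N (envA_law N e pa pk) * h\<bar>
    \<le> 32 / c * (real N ^ 3 * (e * E (Pi_pmf {..<N} 0 (\<lambda>_. pa)) (merger_term N))
      + real N ^ 3 * E (Pi_pmf {..<N} 0 (\<lambda>_. pk)) (merger_term N))"
proof -
  let ?Pa = "Pi_pmf {..<N} 0 (\<lambda>_. pa)" and ?Pk = "Pi_pmf {..<N} 0 (\<lambda>_. pk)"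
  define v where "v = E (envA_law N e pa pk) (nu1_fact2 N)"
  have split: "E (envA_law N e pa pk) F = e * E ?Pa F + (1 - e) * E ?Pk F" for F
    using assms by (intro expectation_envA_law) auto
  have "0 \<le> e * E ?Pa (merger_term N)" "0 \<le> e * E ?Pk (merger_term N)"
    "0 \<le> (1 - e) * E ?Pk (merger_term N)"
    using assms merger_expectation_nonneg[of N pa] merger_expectation_nonneg[of N pk] by simp_all
  moreover have "h = e * E ?Pa (merger_term N) + E ?Pk (merger_term N) - e * E ?Pk (merger_term N)"
    unfolding h_def split by (simp add: algebra_simps)
  ultimately have h: "0 \<le> h" "h \<le> e * E ?Pa (merger_term N) + E ?Pk (merger_term N)"
    by (simp_all add: algebra_simps)
  have "(1 / 2) * c \<le> (1 - e) * E ?Pk (nu1_fact2 N)"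
    using assms by (intro mult_mono) auto
  moreover have "0 \<le> e * E ?Pa (nu1_fact2 N)"
    using assms by (auto intro!: mult_nonneg_nonneg expectation_nonneg_pmf nu1_fact2_nonneg)
  ultimately have v: "c / 2 \<le> v"
    unfolding v_def split by linarith
  have "real N ^ 2 / coal_cN N (envA_law N e pa pk) * h = real N ^ 2 * (8 * (2 * real N - 1)) / v * h"
    unfolding coal_cN_def v_def[symmetric] using assms v by (simp add: field_simps)
  also have "\<dots> \<le> real N ^ 2 * (8 * (2 * real N)) / (c / 2) * h"
    using assms v h by (intro mult_right_mono frac_le mult_left_mono) auto
  also have "\<dots> = 32 / c * (real N ^ 3 * h)"
    using assms by (simp add: field_simps power2_eq_square power3_eq_cube)
  also have "\<dots> \<le> 32 / c * (real N ^ 3 * (e * E ?Pa (merger_term N)) + real N ^ 3 * E ?Pk (merger_term N))"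
    using h assms by (simp only: distrib_left[symmetric]) (intro mult_left_mono; simp)
  finally have "real N ^ 2 / coal_cN N (envA_law N e pa pk) * h
      \<le> 32 / c * (real N ^ 3 * (e * E ?Pa (merger_term N)) + real N ^ 3 * E ?Pk (merger_term N))" .
  moreover have "0 \<le> real N ^ 2 / coal_cN N (envA_law N e pa pk) * h"
    unfolding coal_cN_def v_def[symmetric] using assms v h
    by (intro mult_nonneg_nonneg divide_nonneg_nonneg) auto
  ultimately show ?thesis
    by simp
qed

lemma coalescence_ratio_tendsto_0:
  fixes \<epsilon> :: "nat \<Rightarrow> real" and pa pk :: "nat \<Rightarrow> nat pmf"
  assumes "0 < c"
    and eps: "\<epsilon> \<longlonglongrightarrow> 0" "\<forall>\<^sub>F N in sequentially. 0 \<le> \<epsilon> N"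
    and nu1: "\<forall>\<^sub>F N in sequentially. c \<le> E (Pi_pmf {..<N} 0 (\<lambda>_. pk N)) (nu1_fact2 N)"
    and finite: "\<And>N. finite (set_pmf (pa N))" "\<And>N. finite (set_pmf (pk N))"
    and heavy: "(\<lambda>N. real N ^ 3 * (\<epsilon> N * E (Pi_pmf {..<N} 0 (\<lambda>_. pa N)) (merger_term N))) \<longlonglongrightarrow> 0"
    and light: "(\<lambda>N. real N ^ 3 * E (Pi_pmf {..<N} 0 (\<lambda>_. pk N)) (merger_term N)) \<longlonglongrightarrow> 0"
  shows "(\<lambda>N. real N ^ 2 / coal_cN N (envA_law N (\<epsilon> N) (pa N) (pk N))
    * E (envA_law N (\<epsilon> N) (pa N) (pk N)) (merger_term N)) \<longlonglongrightarrow> 0"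
proof (rule Lim_null_comparison)
  show "(\<lambda>N. 32 / c * (real N ^ 3 * (\<epsilon> N * E (Pi_pmf {..<N} 0 (\<lambda>_. pa N)) (merger_term N))
      + real N ^ 3 * E (Pi_pmf {..<N} 0 (\<lambda>_. pk N)) (merger_term N))) \<longlonglongrightarrow> 0"
    using tendsto_mult[OF tendsto_const[of "32 / c"] tendsto_add[OF heavy light]] by simp
  have "\<forall>\<^sub>F N in sequentially. \<epsilon> N < 1 / 2"
    using eps(1) by (rule order_tendstoD) simp
  then show "\<forall>\<^sub>F N in sequentially. norm (real N ^ 2 / coal_cN N (envA_law N (\<epsilon> N) (pa N) (pk N))
      * E (envA_law N (\<epsilon> N) (pa N) (pk N)) (merger_term N))
      \<le> 32 / c * (real N ^ 3 * (\<epsilon> N * E (Pi_pmf {..<N} 0 (\<lambda>_. pa N)) (merger_term N))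
        + real N ^ 3 * E (Pi_pmf {..<N} 0 (\<lambda>_. pk N)) (merger_term N))"
    using eps(2) nu1 eventually_ge_at_top[of 1]
  proof eventually_elim
    case (elim N)
    from coalescence_ratio_le[OF \<open>0 < c\<close> elim(2,1,4) finite elim(3)] show ?case
      by (simp only: real_norm_def)
  qed
qed

theorem lemma9:
  fixes \<alpha> \<kappa> c :: real
    and \<zeta> :: "nat \<Rightarrow> nat"
    and p\<alpha> p\<kappa> :: "nat \<Rightarrow> nat pmf"
    and g\<alpha> f\<alpha> g\<kappa> f\<kappa> :: "nat \<Rightarrow> real"
    and \<epsilon> :: "nat \<Rightarrow> real"
  assumes alpha: "1 \<le> \<alpha>" "\<alpha> < 2"
    and kappa: "2 \<le> \<kappa>"
    and c_pos: "0 < c"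
    and zeta: "liminf (\<lambda>N. ereal (real (\<zeta> N) / real N)) > 0"
    and bounds_\<alpha>: "admissible_bounds g\<alpha> f\<alpha>"
    and bounds_\<kappa>: "admissible_bounds g\<kappa> f\<kappa>"
    and class_\<alpha>: "\<And>N. in_class_L (p\<alpha> N) \<alpha> (\<zeta> N) g\<alpha> f\<alpha>"
    and class_\<kappa>: "\<And>N. in_class_L (p\<kappa> N) \<kappa> (\<zeta> N) g\<kappa> f\<kappa>"
    and mean_\<alpha>: "\<forall>\<^sub>F N in sequentially. measure_pmf.expectation (p\<alpha> N) real > 2"
    and mean_\<kappa>: "\<forall>\<^sub>F N in sequentially. measure_pmf.expectation (p\<kappa> N) real > 2"
    and eps: "\<And>N. \<epsilon> N = c * real N powr (\<alpha> - 2) * (if \<kappa> > 2 then 1 else ln (real N))"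
  shows "((\<lambda>N. real N ^ 2 / coal_cN N (envA_law N (\<epsilon> N) (p\<alpha> N) (p\<kappa> N)) *
            measure_pmf.expectation (envA_law N (\<epsilon> N) (p\<alpha> N) (p\<kappa> N))
              (\<lambda>x. real (x 0) * (real (x 0) - 1) * real (x 1) * (real (x 1) - 1)
                    / real (S_tot N x) ^ 4
                    * (if 2 * N \<le> S_tot N x then 1 else 0)))
          \<longlonglongrightarrow> 0)"
proof -
  obtain B\<alpha> g0\<alpha> where law_\<alpha>: "\<And>N. powerlaw_pmf (p\<alpha> N) \<alpha> (\<zeta> N) B\<alpha> g0\<alpha>"
    by (rule powerlaw_pmf_of_in_class_L[of g\<alpha> f\<alpha> p\<alpha> \<alpha> \<zeta>, OF bounds_\<alpha> class_\<alpha>]) (use alpha in auto)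
  obtain B\<kappa> g0\<kappa> where law_\<kappa>: "\<And>N. powerlaw_pmf (p\<kappa> N) \<kappa> (\<zeta> N) B\<kappa> g0\<kappa>"
    by (rule powerlaw_pmf_of_in_class_L[of g\<kappa> f\<kappa> p\<kappa> \<kappa> \<zeta>, OF bounds_\<kappa> class_\<kappa>]) (use kappa in auto)
  obtain d where d: "0 < d" "\<forall>\<^sub>F N in sequentially. d * real N \<le> real (\<zeta> N)"
    using liminf_ratio_pos_imp_eventually_ge[OF zeta] by blast
  interpret light_family \<kappa> p\<kappa> \<zeta> B\<kappa> g0\<kappa> d
    by (rule light_family.intro) (use kappa law_\<kappa> mean_\<kappa> d in auto)
  obtain c\<^sub>\<nu> where "0 < c\<^sub>\<nu>" "\<forall>\<^sub>F N in sequentially. c\<^sub>\<nu> \<le> E (Pi_pmf {..<N} 0 (\<lambda>_. p\<kappa> N)) (nu1_fact2 N)"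
    by (rule nu1_fact2_expectation_ge)
  moreover have eps_bounds: "\<forall>\<^sub>F N in sequentially. 0 \<le> \<epsilon> N \<and> \<epsilon> N \<le> c * (real N powr (\<alpha> - 2) * (1 + ln (real N)))"
    using environment_weight_bounds[OF eps c_pos] .
  moreover have "\<epsilon> \<longlonglongrightarrow> 0"
    using environment_weight_tendsto_0[OF alpha(2) eps_bounds] .
  moreover have "(\<lambda>N. real N ^ 3 * (\<epsilon> N * E (Pi_pmf {..<N} 0 (\<lambda>_. p\<alpha> N)) (merger_term N))) \<longlonglongrightarrow> 0"
    using merger_expectation_heavy_tendsto_0[OF law_\<alpha> alpha d eps_bounds] .
  moreover have "(\<lambda>N. real N ^ 3 * E (Pi_pmf {..<N} 0 (\<lambda>_. p\<kappa> N)) (merger_term N)) \<longlonglongrightarrow> 0"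
    using kappa by (intro merger_expectation_light_tendsto_0[OF law_\<kappa>]) simp
  ultimately have "(\<lambda>N. real N ^ 2 / coal_cN N (envA_law N (\<epsilon> N) (p\<alpha> N) (p\<kappa> N))
      * E (envA_law N (\<epsilon> N) (p\<alpha> N) (p\<kappa> N)) (merger_term N)) \<longlonglongrightarrow> 0"
    by (intro coalescence_ratio_tendsto_0 powerlaw_pmf.finite_support[OF law_\<alpha>]
        powerlaw_pmf.finite_support[OF law_\<kappa>]) (auto elim: eventually_mono)
  then show ?thesis
    unfolding merger_term_def[abs_def] .
qed

end
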